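(* Let $H$ be a Hopf algebra with invertible antipode $S$ and let $B=A^{coH}\subseteq A$ be an $H$-Hopf–Galois extension with translation map $\tau$. Define the left coaction ${}^A\delta:A\to H\otimes A$, ${}^A\delta(a)=S^{-1}(a_{(1)})\otimes a_{(0)}$, and $$A^H\square{}^HA:=\ker(\delta^A\otimes\mathrm{id}_A-\mathrm{id}_A\otimes{}^A\delta)=\{\textstyle\sum a\otimes\tilde a\in A\otimes A:\ \sum a_{(0)}\otimes a_{(1)}\otimes\tilde a=\sum a\otimes S^{-1}(\tilde a_{(1)})\otimes\tilde a_{(0)}\}.$$ Then $A^H\square{}^HA$ coincides with $(A\otimes A)^{coH}=\{X\in A\otimes A:\delta^{A\otimes A}(X)=X\otimes 1_H\}$, where $\delta^{A\otimes A}(a\otimes\tilde a)=a_{(0)}\otimes\tilde a_{(0)}\otimes a_{(1)}\tilde a_{(1)}$, and with $\mathcal{C}:=\{\sum a\otimes\tilde a\in A\otimes A:\ \sum a_{(0)}\otimes a_{(1)}^{\langle 1\rangle}\otimes_B a_{(1)}^{\langle 2\rangle}\tilde a=\sum a\otimes\tilde a\otimes_B 1_A\}$.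
   Context: All algebras are unital and associative over $\mathbb{C}$; Sweedler notation with implicit summation is used. $A$ is a right $H$-comodule algebra with coaction $\delta^A(a)=a_{(0)}\otimes a_{(1)}$, $B=A^{coH}=\{b\in A:\delta^A(b)=b\otimes 1_H\}$. The extension is $H$-Hopf–Galois if $\chi:A\otimes_B A\to A\otimes H$, $a'\otimes_B a\mapsto a'a_{(0)}\otimes a_{(1)}$, is bijective; the translation map is $\tau(h)=\chi^{-1}(1_A\otimes h)=:h^{\langle 1\rangle}\otimes_B h^{\langle 2\rangle}$. *)

theory Defs
  imports Complex_Main
begin

class complex_vector = ab_group_add +
  fixes scaleC :: "complex \<Rightarrow> 'a \<Rightarrow> 'a"
  assumes scaleC_add_right: "scaleC a (x + y) = scaleC a x + scaleC a y"
    and scaleC_add_left: "scaleC (a + b) x = scaleC a x + scaleC b x"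
    and scaleC_scaleC: "scaleC a (scaleC b x) = scaleC (a * b) x"
    and scaleC_one: "scaleC 1 x = x"

class complex_algebra_1 = complex_vector + ring_1 +
  assumes mult_scaleC_left: "scaleC a x * y = scaleC a (x * y)"
    and mult_scaleC_right: "x * scaleC a y = scaleC a (x * y)"

instantiation complex :: complex_algebra_1
begin
definition scaleC_complex :: "complex \<Rightarrow> complex \<Rightarrow> complex" where
  "scaleC_complex a x = a * x"
instance by standard (simp_all add: scaleC_complex_def algebra_simps)
end

definition linearC :: "('v::complex_vector \<Rightarrow> 'w::complex_vector) \<Rightarrow> bool" where
  "linearC f \<longleftrightarrow> (\<forall>x y. f (x + y) = f x + f y) \<and> (\<forall>c x. f (scaleC c x) = scaleC c (f x))"

text \<open>An element of a tensor product is represented by a finite formal sum of pure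
tensors, i.e. a list of tuples (every tensor is such a sum, scalars being absorbed
into the first factor). Two formal sums denote the same tensor iff the difference of
the associated finitely supported functions on the product set lies in the complex
span of the defining (multilinearity, resp. balancing) relations. This is the usual
construction of the tensor product as the free vector space modulo relations.\<close>

definition fsum :: "'x list \<Rightarrow> 'x \<Rightarrow> complex" where
  "fsum xs = (\<lambda>p. of_nat (count_list xs p))"

definition dlt :: "'x \<Rightarrow> 'x \<Rightarrow> complex" where
  "dlt p = (\<lambda>q. if q = p then 1 else 0)"

definition csubspace :: "('x \<Rightarrow> complex) set \<Rightarrow> bool" where
  "csubspace S \<longleftrightarrow> (\<lambda>p. 0) \<in> S \<and> (\<forall>f\<in>S. \<forall>g\<in>S. (\<lambda>p. f p + g p) \<in> S)
     \<and> (\<forall>c. \<forall>f\<in>S. (\<lambda>p. c * f p) \<in> S)"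

definition cspan :: "('x \<Rightarrow> complex) set \<Rightarrow> ('x \<Rightarrow> complex) set" where
  "cspan R = \<Inter>{S. csubspace S \<and> R \<subseteq> S}"

definition teq :: "('x \<Rightarrow> complex) set \<Rightarrow> 'x list \<Rightarrow> 'x list \<Rightarrow> bool" where
  "teq R xs ys \<longleftrightarrow> (\<lambda>p. fsum xs p - fsum ys p) \<in> cspan R"

definition rel2 :: "('a::complex_vector \<times> 'b::complex_vector \<Rightarrow> complex) set" where
  "rel2 =
     {(\<lambda>p. dlt (x + x', y) p - dlt (x, y) p - dlt (x', y) p) | x x' y. True}
   \<union> {(\<lambda>p. dlt (x, y + y') p - dlt (x, y) p - dlt (x, y') p) | x y y'. True}
   \<union> {(\<lambda>p. dlt (scaleC c x, y) p - c * dlt (x, y) p) | c x y. True}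
   \<union> {(\<lambda>p. dlt (x, scaleC c y) p - c * dlt (x, y) p) | c x y. True}"

definition rel3 :: "('a::complex_vector \<times> 'b::complex_vector \<times> 'c::complex_vector \<Rightarrow> complex) set" where
  "rel3 =
     {(\<lambda>p. dlt (x + x', y, z) p - dlt (x, y, z) p - dlt (x', y, z) p) | x x' y z. True}
   \<union> {(\<lambda>p. dlt (x, y + y', z) p - dlt (x, y, z) p - dlt (x, y', z) p) | x y y' z. True}
   \<union> {(\<lambda>p. dlt (x, y, z + z') p - dlt (x, y, z) p - dlt (x, y, z') p) | x y z z'. True}
   \<union> {(\<lambda>p. dlt (scaleC c x, y, z) p - c * dlt (x, y, z) p) | c x y z. True}
   \<union> {(\<lambda>p. dlt (x, scaleC c y, z) p - c * dlt (x, y, z) p) | c x y z. True}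
   \<union> {(\<lambda>p. dlt (x, y, scaleC c z) p - c * dlt (x, y, z) p) | c x y z. True}"

definition relB2 :: "'a::complex_algebra_1 set \<Rightarrow> ('a \<times> 'a \<Rightarrow> complex) set" where
  "relB2 B = rel2 \<union> {(\<lambda>p. dlt (x * b, y) p - dlt (x, b * y) p) | x y b. b \<in> B}"

text \<open>Relations for A \<otimes> (A \<otimes>_B A).\<close>
definition relB3 :: "'a::complex_algebra_1 set \<Rightarrow> ('a \<times> 'a \<times> 'a \<Rightarrow> complex) set" where
  "relB3 B = rel3 \<union> {(\<lambda>p. dlt (z, x * b, y) p - dlt (z, x, b * y) p) | z x y b. b \<in> B}"

definition linear2 :: "('v::complex_vector \<Rightarrow> ('a::complex_vector \<times> 'b::complex_vector) list) \<Rightarrow> bool" where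
  "linear2 f \<longleftrightarrow> (\<forall>x y. teq rel2 (f (x + y)) (f x @ f y))
     \<and> (\<forall>c x. teq rel2 (f (scaleC c x)) (map (\<lambda>(u, v). (scaleC c u, v)) (f x)))"

text \<open>Hopf algebra (H, \<Delta>, \<epsilon>, S) over the complex numbers; the algebra structure is
the type class complex_algebra_1, \<Delta>(h) is given by a Sweedler representative.\<close>
definition hopf_algebra :: "('h::complex_algebra_1 \<Rightarrow> ('h \<times> 'h) list) \<Rightarrow> ('h \<Rightarrow> complex) \<Rightarrow> ('h \<Rightarrow> 'h) \<Rightarrow> bool" where
  "hopf_algebra \<Delta> \<epsilon> S \<longleftrightarrow>
     linear2 \<Delta> \<and> linearC \<epsilon> \<and> linearC S
   \<and> (\<forall>h. teq rel3 [(u, v, w). (p, w) \<leftarrow> \<Delta> h, (u, v) \<leftarrow> \<Delta> p]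
                   [(u, v, w). (u, q) \<leftarrow> \<Delta> h, (v, w) \<leftarrow> \<Delta> q])
   \<and> (\<forall>h. sum_list (map (\<lambda>(u, v). scaleC (\<epsilon> u) v) (\<Delta> h)) = h)
   \<and> (\<forall>h. sum_list (map (\<lambda>(u, v). scaleC (\<epsilon> v) u) (\<Delta> h)) = h)
   \<and> (\<forall>h k. teq rel2 (\<Delta> (h * k)) [(u * u', v * v'). (u, v) \<leftarrow> \<Delta> h, (u', v') \<leftarrow> \<Delta> k])
   \<and> teq rel2 (\<Delta> 1) [(1, 1)]
   \<and> (\<forall>h k. \<epsilon> (h * k) = \<epsilon> h * \<epsilon> k) \<and> \<epsilon> 1 = 1
   \<and> (\<forall>h. sum_list (map (\<lambda>(u, v). S u * v) (\<Delta> h)) = scaleC (\<epsilon> h) 1)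
   \<and> (\<forall>h. sum_list (map (\<lambda>(u, v). u * S v) (\<Delta> h)) = scaleC (\<epsilon> h) 1)"

text \<open>Right H-comodule algebra A with coaction \<delta>(a) = a_(0) \<otimes> a_(1).\<close>
definition comodule_algebra ::
  "('h::complex_algebra_1 \<Rightarrow> ('h \<times> 'h) list) \<Rightarrow> ('h \<Rightarrow> complex) \<Rightarrow> ('a::complex_algebra_1 \<Rightarrow> ('a \<times> 'h) list) \<Rightarrow> bool" where
  "comodule_algebra \<Delta> \<epsilon> \<delta> \<longleftrightarrow>
     linear2 \<delta>
   \<and> (\<forall>a. teq rel3 [(x, h, k). (y, k) \<leftarrow> \<delta> a, (x, h) \<leftarrow> \<delta> y]
                   [(x, h, k). (x, g) \<leftarrow> \<delta> a, (h, k) \<leftarrow> \<Delta> g])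
   \<and> (\<forall>a. sum_list (map (\<lambda>(x, h). scaleC (\<epsilon> h) x) (\<delta> a)) = a)
   \<and> (\<forall>a a'. teq rel2 (\<delta> (a * a')) [(x * y, h * k). (x, h) \<leftarrow> \<delta> a, (y, k) \<leftarrow> \<delta> a'])
   \<and> teq rel2 (\<delta> 1) [(1, 1)]"

definition coinvariants :: "('a::complex_algebra_1 \<Rightarrow> ('a \<times> 'h::complex_algebra_1) list) \<Rightarrow> 'a set" where
  "coinvariants \<delta> = {b. teq rel2 (\<delta> b) [(b, 1)]}"

definition galois_map :: "('a::complex_algebra_1 \<Rightarrow> ('a \<times> 'h::complex_algebra_1) list) \<Rightarrow> ('a \<times> 'a) list \<Rightarrow> ('a \<times> 'h) list" where
  "galois_map \<delta> X = [(a' * x, h). (a', a) \<leftarrow> X, (x, h) \<leftarrow> \<delta> a]"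

definition hopf_galois :: "('a::complex_algebra_1 \<Rightarrow> ('a \<times> 'h::complex_algebra_1) list) \<Rightarrow> bool" where
  "hopf_galois \<delta> \<longleftrightarrow>
     (\<forall>X Y. teq rel2 (galois_map \<delta> X) (galois_map \<delta> Y) \<longrightarrow> teq (relB2 (coinvariants \<delta>)) X Y)
   \<and> (\<forall>Y. \<exists>X. teq rel2 (galois_map \<delta> X) Y)"

definition translation_map :: "('a::complex_algebra_1 \<Rightarrow> ('a \<times> 'h::complex_algebra_1) list) \<Rightarrow> ('h \<Rightarrow> ('a \<times> 'a) list) \<Rightarrow> bool" where
  "translation_map \<delta> \<tau> \<longleftrightarrow> (\<forall>h. teq rel2 (galois_map \<delta> (\<tau> h)) [(1, h)])"

definition cotensor :: "('a::complex_algebra_1 \<Rightarrow> ('a \<times> 'h::complex_algebra_1) list) \<Rightarrow> ('h \<Rightarrow> 'h) \<Rightarrow> ('a \<times> 'a) list set" where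
  "cotensor \<delta> Sinv = {X. teq rel3 [(x, h, a'). (a, a') \<leftarrow> X, (x, h) \<leftarrow> \<delta> a]
                                  [(a, Sinv h, y). (a, a') \<leftarrow> X, (y, h) \<leftarrow> \<delta> a']}"

definition tensor_coinv :: "('a::complex_algebra_1 \<Rightarrow> ('a \<times> 'h::complex_algebra_1) list) \<Rightarrow> ('a \<times> 'a) list set" where
  "tensor_coinv \<delta> = {X. teq rel3 [(x, y, h * k). (a, a') \<leftarrow> X, (x, h) \<leftarrow> \<delta> a, (y, k) \<leftarrow> \<delta> a']
                                  [(a, a', 1). (a, a') \<leftarrow> X]}"

definition C_set :: "('a::complex_algebra_1 \<Rightarrow> ('a \<times> 'h::complex_algebra_1) list) \<Rightarrow> ('h \<Rightarrow> ('a \<times> 'a) list) \<Rightarrow> ('a \<times> 'a) list set" where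
  "C_set \<delta> \<tau> = {X. teq (relB3 (coinvariants \<delta>))
                      [(x, u, v * a'). (a, a') \<leftarrow> X, (x, h) \<leftarrow> \<delta> a, (u, v) \<leftarrow> \<tau> h]
                      [(a, a', 1). (a, a') \<leftarrow> X]}"

end

theory Submission
  imports Defs "HOL-Library.Function_Algebras"
begin

(*
  Each of the three sets is cut out by an equation in a triple tensor product, and suitable linear
  maps carry one equation into the other.
  Applying x \<otimes> h \<otimes> a' \<mapsto> x \<otimes> a'_(0) \<otimes> h a'_(1) to the cotensor equation gives the coaction of X on
  one side and, by coassociativity and S^-1(h_(2)) h_(1) = \<epsilon>(h) 1, X \<otimes> 1 on the other.
  Conversely, x \<otimes> y \<otimes> h \<mapsto> x \<otimes> h S^-1(y_(1)) \<otimes> y_(0) turns coinvariance into the cotensor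
  equation, now using h_(2) S^-1(h_(1)) = \<epsilon>(h) 1.
  For C the maps are id \<otimes> \<chi> and id \<otimes> \<chi>^-1, i.e. x \<otimes> y \<otimes> h \<mapsto> x \<otimes> y \<tau>(h); they work because
  \<chi>(\<tau>(h) a') = a'_(0) \<otimes> h a'_(1) and a_(0) \<tau>(a_(1)) = 1 \<otimes>_B a.
  Tensors are lists of pure tensors modulo the span of the defining relations, so each map is given
  on pure tensors and checked to respect the relations.
*)

instantiation "fun" :: (type, complex_vector) complex_vector
begin
definition scaleC_fun :: "complex \<Rightarrow> ('a \<Rightarrow> 'b) \<Rightarrow> 'a \<Rightarrow> 'b" where
  "scaleC_fun c f = (\<lambda>x. scaleC c (f x))"
instance
  by standard
    (simp_all add: scaleC_fun_def fun_eq_iff scaleC_add_right scaleC_add_left scaleC_scaleC scaleC_one)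
end

context complex_vector
begin

lemma scaleC_zero_left [simp]: "scaleC 0 x = 0"
  using scaleC_add_left[of 0 0 x] by simp

lemma scaleC_zero_right [simp]: "scaleC c 0 = 0"
  using scaleC_add_right[of c 0 0] by simp

lemma scaleC_minus_left: "scaleC (- c) x = - scaleC c x"
  using scaleC_add_left[of "- c" c x] by (simp add: eq_neg_iff_add_eq_0)

lemma scaleC_minus_right: "scaleC c (- x) = - scaleC c x"
  using scaleC_add_right[of c "- x" x] by (simp add: eq_neg_iff_add_eq_0)

lemma scaleC_diff_right: "scaleC c (x - y) = scaleC c x - scaleC c y"
  using scaleC_add_right[of c x "- y"] by (simp add: scaleC_minus_right)

lemma scaleC_sum: "scaleC c (sum f A) = (\<Sum>x\<in>A. scaleC c (f x))"
  by (induction A rule: infinite_finite_induct) (simp_all add: scaleC_add_right)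

end

lemma scaleC_fun_apply [simp]: "scaleC c f x = scaleC c (f x)"
  by (simp add: scaleC_fun_def)

lemma scaleC_complex_eq [simp]: "scaleC a (x::complex) = a * x"
  by (simp add: scaleC_complex_def)

lemma additive_sum_list:
  fixes L :: "'a::monoid_add \<Rightarrow> 'b::ab_group_add"
  assumes "\<And>x y. L (x + y) = L x + L y"
  shows "L (sum_list xs) = sum_list (map L xs)"
proof -
  have "L 0 = 0"
    using assms[of 0 0] by simp
  then show ?thesis
    by (induction xs) (simp_all add: assms)
qed

section \<open>Linear extension from the free vector space\<close>

definition csupp :: "('x \<Rightarrow> complex) \<Rightarrow> 'x set" where
  "csupp f = {p. f p \<noteq> 0}"

definition lin_ext :: "('x \<Rightarrow> 'v::complex_vector) \<Rightarrow> ('x \<Rightarrow> complex) \<Rightarrow> 'v" where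
  "lin_ext E f = (\<Sum>p\<in>csupp f. scaleC (f p) (E p))"

lemma finite_csupp_add: "finite (csupp f) \<Longrightarrow> finite (csupp g) \<Longrightarrow> finite (csupp (f + g))"
  unfolding csupp_def by (rule finite_subset[of _ "{p. f p \<noteq> 0} \<union> {p. g p \<noteq> 0}"]) auto

lemma finite_csupp_scaleC: "finite (csupp f) \<Longrightarrow> finite (csupp (scaleC c f))"
  unfolding csupp_def by (rule finite_subset[of _ "{p. f p \<noteq> 0}"]) auto

lemma finite_csupp_diff: "finite (csupp f) \<Longrightarrow> finite (csupp g) \<Longrightarrow> finite (csupp (f - g))"
  using finite_csupp_add[of f "- g"] by (simp add: csupp_def)

lemma finite_csupp_zero [simp]: "finite (csupp 0)"
  by (simp add: csupp_def)

lemma lin_ext_zero [simp]: "lin_ext E 0 = 0"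
  by (simp add: lin_ext_def csupp_def)

lemma finite_csupp_dlt [simp]: "finite (csupp (dlt p))"
  by (simp add: csupp_def dlt_def)

lemma fsum_Nil [simp]: "fsum [] = 0"
  by (simp add: fsum_def fun_eq_iff)

lemma fsum_Cons: "fsum (x # xs) = dlt x + fsum xs"
  by (simp add: fsum_def dlt_def fun_eq_iff)

lemma fsum_append: "fsum (xs @ ys) = fsum xs + fsum ys"
  by (simp add: fsum_def fun_eq_iff)

lemma finite_csupp_fsum [simp]: "finite (csupp (fsum xs))"
proof (induction xs)
  case Nil
  then show ?case by (simp only: fsum_Nil finite_csupp_zero)
next
  case (Cons x xs)
  then show ?case by (simp only: fsum_Cons) (rule finite_csupp_add, simp_all)
qed

lemma lin_ext_eq_sum:
  "finite T \<Longrightarrow> csupp f \<subseteq> T \<Longrightarrow> lin_ext E f = (\<Sum>p\<in>T. scaleC (f p) (E p))"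
  unfolding lin_ext_def by (rule sum.mono_neutral_left) (auto simp: csupp_def)

lemma lin_ext_add:
  assumes "finite (csupp f)" "finite (csupp g)"
  shows "lin_ext E (f + g) = lin_ext E f + lin_ext E g"
proof -
  let ?T = "csupp f \<union> csupp g"
  have "lin_ext E (f + g) = (\<Sum>p\<in>?T. scaleC ((f + g) p) (E p))"
    using assms by (intro lin_ext_eq_sum) (auto simp: csupp_def)
  also have "\<dots> = (\<Sum>p\<in>?T. scaleC (f p) (E p)) + (\<Sum>p\<in>?T. scaleC (g p) (E p))"
    by (simp add: scaleC_add_left sum.distrib)
  also have "\<dots> = lin_ext E f + lin_ext E g"
    using assms lin_ext_eq_sum[of ?T f E] lin_ext_eq_sum[of ?T g E] by auto
  finally show ?thesis .
qed

lemma lin_ext_scaleC: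
  assumes "finite (csupp f)"
  shows "lin_ext E (scaleC c f) = scaleC c (lin_ext E f)"
proof -
  have "lin_ext E (scaleC c f) = (\<Sum>p\<in>csupp f. scaleC (c * f p) (E p))"
    using assms by (subst lin_ext_eq_sum) (auto simp: csupp_def)
  then show ?thesis
    by (simp add: lin_ext_def scaleC_sum scaleC_scaleC)
qed

lemma lin_ext_diff:
  assumes "finite (csupp f)" "finite (csupp g)"
  shows "lin_ext E (f - g) = lin_ext E f - lin_ext E g"
proof -
  have "lin_ext E (- g) = - lin_ext E g"
    using lin_ext_scaleC[OF assms(2), of E "- 1"] by (simp add: scaleC_minus_left scaleC_one fun_eq_iff)
  then show ?thesis
    using lin_ext_add[OF assms(1), of "- g" E] assms(2) by (simp add: csupp_def)
qed

lemma lin_ext_dlt [simp]: "lin_ext E (dlt p) = E p"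
  by (subst lin_ext_eq_sum[of "{p}"]) (auto simp: csupp_def dlt_def scaleC_one)

lemma lin_ext_fsum: "lin_ext E (fsum xs) = sum_list (map E xs)"
proof (induction xs)
  case Nil
  then show ?case by (simp only: fsum_Nil lin_ext_zero) simp
next
  case (Cons x xs)
  then show ?case by (simp only: fsum_Cons lin_ext_add[OF finite_csupp_dlt finite_csupp_fsum]) simp
qed

definition subspaceC :: "'v::complex_vector set \<Rightarrow> bool" where
  "subspaceC W \<longleftrightarrow> 0 \<in> W \<and> (\<forall>x\<in>W. \<forall>y\<in>W. x + y \<in> W) \<and> (\<forall>c. \<forall>x\<in>W. scaleC c x \<in> W)"

lemma csubspace_iff_subspaceC: "csubspace S \<longleftrightarrow> subspaceC S"
  by (simp add: csubspace_def subspaceC_def zero_fun_def plus_fun_def scaleC_fun_def)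

lemma subspaceC_Inter: "(\<And>S. S \<in> F \<Longrightarrow> subspaceC S) \<Longrightarrow> subspaceC (\<Inter>F)"
  unfolding subspaceC_def by blast

lemma subspaceC_cspan: "subspaceC (cspan R)"
  unfolding cspan_def by (rule subspaceC_Inter) (simp add: csubspace_iff_subspaceC)

lemma cspan_superset: "R \<subseteq> cspan R"
  unfolding cspan_def by auto

lemma cspan_least: "subspaceC S \<Longrightarrow> R \<subseteq> S \<Longrightarrow> cspan R \<subseteq> S"
  unfolding cspan_def csubspace_iff_subspaceC by auto

lemma cspan_mono: "R \<subseteq> R' \<Longrightarrow> cspan R \<subseteq> cspan R'"
  by (meson cspan_superset cspan_least order_trans subspaceC_cspan)

lemma subspaceC_add: "subspaceC W \<Longrightarrow> x \<in> W \<Longrightarrow> y \<in> W \<Longrightarrow> x + y \<in> W"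
  by (simp add: subspaceC_def)

lemma subspaceC_scaleC: "subspaceC W \<Longrightarrow> x \<in> W \<Longrightarrow> scaleC c x \<in> W"
  by (simp add: subspaceC_def)

lemma subspaceC_uminus: "subspaceC W \<Longrightarrow> x \<in> W \<Longrightarrow> - x \<in> W"
  using subspaceC_scaleC[of W x "- 1"] by (simp add: scaleC_minus_left scaleC_one)

definition maps_into :: "('x \<Rightarrow> complex) set \<Rightarrow> ('x \<Rightarrow> 'v::complex_vector) \<Rightarrow> 'v set \<Rightarrow> bool" where
  "maps_into R E W \<longleftrightarrow> (\<forall>r\<in>R. finite (csupp r) \<and> lin_ext E r \<in> W)"

lemma lin_ext_cspan:
  assumes "maps_into R E W" "subspaceC W" "f \<in> cspan R"
  shows "finite (csupp f) \<and> lin_ext E f \<in> W"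
proof -
  have "cspan R \<subseteq> {f. finite (csupp f) \<and> lin_ext E f \<in> W}"
  proof (rule cspan_least)
    show "subspaceC {f. finite (csupp f) \<and> lin_ext E f \<in> W}"
      using assms(2)
      by (auto simp: subspaceC_def finite_csupp_add finite_csupp_scaleC lin_ext_add lin_ext_scaleC)
    show "R \<subseteq> {f. finite (csupp f) \<and> lin_ext E f \<in> W}"
      using assms(1) by (auto simp: maps_into_def)
  qed
  then show ?thesis
    using assms(3) by auto
qed

definition eq_mod :: "('x \<Rightarrow> complex) set \<Rightarrow> ('x \<Rightarrow> complex) \<Rightarrow> ('x \<Rightarrow> complex) \<Rightarrow> bool" where
  "eq_mod R f g \<longleftrightarrow> f - g \<in> cspan R"

lemma teq_iff_eq_mod: "teq R xs ys \<longleftrightarrow> eq_mod R (fsum xs) (fsum ys)"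
  by (simp add: teq_def eq_mod_def fun_diff_def)

lemma eq_mod_refl [simp]: "eq_mod R f f"
  using subspaceC_cspan[of R] by (simp add: eq_mod_def subspaceC_def)

lemma eq_mod_sym: "eq_mod R f g \<Longrightarrow> eq_mod R g f"
  unfolding eq_mod_def using subspaceC_uminus[OF subspaceC_cspan] by fastforce

lemma eq_mod_trans [trans]: "eq_mod R f g \<Longrightarrow> eq_mod R g h \<Longrightarrow> eq_mod R f h"
  unfolding eq_mod_def using subspaceC_add[OF subspaceC_cspan, of "f - g" R "g - h"] by simp

lemma eq_mod_add: "eq_mod R f g \<Longrightarrow> eq_mod R f' g' \<Longrightarrow> eq_mod R (f + f') (g + g')"
  unfolding eq_mod_def using subspaceC_add[OF subspaceC_cspan, of "f - g" R "f' - g'"]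
  by (simp add: algebra_simps)

lemma eq_mod_scaleC: "eq_mod R f g \<Longrightarrow> eq_mod R (scaleC c f) (scaleC c g)"
  unfolding eq_mod_def using subspaceC_scaleC[OF subspaceC_cspan, of "f - g" R c]
  by (simp add: scaleC_diff_right)

lemma eq_mod_mono: "R \<subseteq> R' \<Longrightarrow> eq_mod R f g \<Longrightarrow> eq_mod R' f g"
  unfolding eq_mod_def using cspan_mono by blast

lemma teq_refl [simp]: "teq R xs xs"
  by (simp add: teq_iff_eq_mod)

lemma teq_sym: "teq R xs ys \<Longrightarrow> teq R ys xs"
  by (simp add: teq_iff_eq_mod eq_mod_sym)

lemma teq_trans [trans]: "teq R xs ys \<Longrightarrow> teq R ys zs \<Longrightarrow> teq R xs zs"
  by (meson teq_iff_eq_mod eq_mod_trans)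

lemma teq_append: "teq R xs ys \<Longrightarrow> teq R xs' ys' \<Longrightarrow> teq R (xs @ xs') (ys @ ys')"
  by (simp add: teq_iff_eq_mod fsum_append eq_mod_add)

lemma teq_mono: "R \<subseteq> R' \<Longrightarrow> teq R xs ys \<Longrightarrow> teq R' xs ys"
  by (simp add: teq_iff_eq_mod eq_mod_mono)

lemma teq_concat_map:
  "(\<And>x. x \<in> set xs \<Longrightarrow> teq R (F x) (G x)) \<Longrightarrow> teq R (concat (map F xs)) (concat (map G xs))"
  by (induction xs) (simp_all add: teq_append)

lemma lin_ext_diff_mem_if_eq_mod:
  assumes "maps_into R E W" "subspaceC W" "eq_mod R f g" "finite (csupp f)" "finite (csupp g)"
  shows "lin_ext E f - lin_ext E g \<in> W"
  using lin_ext_cspan[OF assms(1,2), of "f - g"] assms(3-) by (simp add: eq_mod_def lin_ext_diff)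

lemma sum_list_eq_if_teq:
  assumes "maps_into R E {0}" "teq R xs ys"
  shows "sum_list (map E xs) = sum_list (map E ys)"
  using lin_ext_diff_mem_if_eq_mod[OF assms(1), of "fsum xs" "fsum ys"] assms(2)
  by (simp add: subspaceC_def teq_iff_eq_mod lin_ext_fsum)

text \<open>F, given on pure tensors, induces a well-defined map from the quotient modulo R to the quotient
  modulo R'.\<close>

definition descends :: "('x \<Rightarrow> complex) set \<Rightarrow> ('y \<Rightarrow> complex) set \<Rightarrow> ('x \<Rightarrow> 'y list) \<Rightarrow> bool" where
  "descends R R' F \<longleftrightarrow> maps_into R (\<lambda>p. fsum (F p)) (cspan R')"

lemma lin_ext_fsum_concat_map: "lin_ext (\<lambda>p. fsum (F p)) (fsum xs) = fsum (concat (map F xs))"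
  by (simp add: lin_ext_fsum) (induction xs, simp_all add: fsum_append)

lemma teq_concat_map_descends:
  assumes "descends R R' F" "teq R xs ys"
  shows "teq R' (concat (map F xs)) (concat (map F ys))"
  using lin_ext_diff_mem_if_eq_mod[OF assms(1)[unfolded descends_def] subspaceC_cspan, of "fsum xs" "fsum ys"]
    assms(2)
  by (simp add: teq_iff_eq_mod lin_ext_fsum_concat_map eq_mod_def)

lemma eq_mod_concat_map_descends:
  assumes "descends R R' F" "eq_mod R (fsum xs) (scaleC c (fsum ys))"
  shows "eq_mod R' (fsum (concat (map F xs))) (scaleC c (fsum (concat (map F ys))))"
  using lin_ext_diff_mem_if_eq_mod[OF assms(1)[unfolded descends_def] subspaceC_cspan,
      of "fsum xs" "scaleC c (fsum ys)"] assms(2)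
  by (simp add: lin_ext_fsum_concat_map eq_mod_def finite_csupp_scaleC lin_ext_scaleC)

lemma teq_of_rel_add:
  assumes "(\<lambda>p. dlt a p - dlt b p - dlt c p) \<in> R"
  shows "teq R [a] [b, c]"
proof -
  have "(\<lambda>p. dlt a p - dlt b p - dlt c p) = fsum [a] - fsum [b, c]"
    by (simp add: fsum_Cons fun_eq_iff)
  then show ?thesis
    using cspan_superset assms by (auto simp: teq_iff_eq_mod eq_mod_def)
qed

lemma eq_mod_of_rel_scaleC:
  assumes "(\<lambda>p. dlt a p - c * dlt b p) \<in> R"
  shows "eq_mod R (fsum [a]) (scaleC c (fsum [b]))"
proof -
  have "(\<lambda>p. dlt a p - c * dlt b p) = fsum [a] - scaleC c (fsum [b])"
    by (simp add: fsum_Cons fun_eq_iff)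
  then show ?thesis
    using cspan_superset assms by (auto simp: eq_mod_def)
qed

lemma teq_of_rel:
  assumes "(\<lambda>p. dlt a p - dlt b p) \<in> R"
  shows "teq R [a] [b]"
proof -
  have "(\<lambda>p. dlt a p - dlt b p) = fsum [a] - fsum [b]"
    by (simp add: fsum_Cons fun_eq_iff)
  then show ?thesis
    using cspan_superset assms by (auto simp: teq_iff_eq_mod eq_mod_def)
qed

lemma rel2_add_left: "teq rel2 [(x + x', y)] [(x, y), (x', y)]"
  by (rule teq_of_rel_add) (unfold rel2_def, blast)

lemma rel2_add_right: "teq rel2 [(x, y + y')] [(x, y), (x, y')]"
  by (rule teq_of_rel_add) (unfold rel2_def, blast)

lemma rel2_scaleC_left: "eq_mod rel2 (fsum [(scaleC c x, y)]) (scaleC c (fsum [(x, y)]))"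
  by (rule eq_mod_of_rel_scaleC) (unfold rel2_def, blast)

lemma rel2_scaleC_right: "eq_mod rel2 (fsum [(x, scaleC c y)]) (scaleC c (fsum [(x, y)]))"
  by (rule eq_mod_of_rel_scaleC) (unfold rel2_def, blast)

lemma rel3_add_1: "teq rel3 [(x + x', y, z)] [(x, y, z), (x', y, z)]"
  by (rule teq_of_rel_add) (unfold rel3_def Un_iff mem_Collect_eq, blast)

lemma rel3_add_2: "teq rel3 [(x, y + y', z)] [(x, y, z), (x, y', z)]"
  by (rule teq_of_rel_add) (unfold rel3_def Un_iff mem_Collect_eq, blast)

lemma rel3_add_3: "teq rel3 [(x, y, z + z')] [(x, y, z), (x, y, z')]"
  by (rule teq_of_rel_add) (unfold rel3_def Un_iff mem_Collect_eq, blast)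

lemma rel3_scaleC_1: "eq_mod rel3 (fsum [(scaleC c x, y, z)]) (scaleC c (fsum [(x, y, z)]))"
  by (rule eq_mod_of_rel_scaleC) (unfold rel3_def Un_iff mem_Collect_eq, blast)

lemma rel3_scaleC_2: "eq_mod rel3 (fsum [(x, scaleC c y, z)]) (scaleC c (fsum [(x, y, z)]))"
  by (rule eq_mod_of_rel_scaleC) (unfold rel3_def Un_iff mem_Collect_eq, blast)

lemma rel3_scaleC_3: "eq_mod rel3 (fsum [(x, y, scaleC c z)]) (scaleC c (fsum [(x, y, z)]))"
  by (rule eq_mod_of_rel_scaleC) (unfold rel3_def, rule UnI2, blast)

lemma rel2_subset_relB2: "rel2 \<subseteq> relB2 B"
  unfolding relB2_def by (rule Un_upper1)

lemma rel3_subset_relB3: "rel3 \<subseteq> relB3 B"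
  unfolding relB3_def by (rule Un_upper1)

lemma relB3_balanced: "b \<in> B \<Longrightarrow> teq (relB3 B) [(z, x * b, y)] [(z, x, b * y)]"
  by (rule teq_of_rel) (unfold relB3_def, blast)

lemma lin_ext_rel_add:
  "finite (csupp (\<lambda>p. dlt a p - dlt b p - dlt c p))
   \<and> lin_ext E (\<lambda>p. dlt a p - dlt b p - dlt c p) = E a - E b - E c"
proof -
  have "(\<lambda>p. dlt a p - dlt b p - dlt c p) = dlt a - dlt b - dlt c"
    by (simp add: fun_eq_iff)
  then show ?thesis
    by (simp add: finite_csupp_diff lin_ext_diff)
qed

lemma lin_ext_rel_scaleC:
  "finite (csupp (\<lambda>p. dlt a p - c * dlt b p))
   \<and> lin_ext E (\<lambda>p. dlt a p - c * dlt b p) = E a - scaleC c (E b)"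
proof -
  have "(\<lambda>p. dlt a p - c * dlt b p) = dlt a - scaleC c (dlt b)"
    by (simp add: fun_eq_iff)
  then show ?thesis
    by (simp add: finite_csupp_diff finite_csupp_scaleC lin_ext_diff lin_ext_scaleC)
qed

lemma lin_ext_rel:
  "finite (csupp (\<lambda>p. dlt a p - dlt b p)) \<and> lin_ext E (\<lambda>p. dlt a p - dlt b p) = E a - E b"
proof -
  have "(\<lambda>p. dlt a p - dlt b p) = dlt a - dlt b"
    by (simp add: fun_eq_iff)
  then show ?thesis
    by (simp add: finite_csupp_diff lin_ext_diff)
qed

lemma maps_into_rel2I:
  assumes "\<And>x x' y. E (x + x', y) - E (x, y) - E (x', y) \<in> W"
    and "\<And>x y y'. E (x, y + y') - E (x, y) - E (x, y') \<in> W"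
    and "\<And>c x y. E (scaleC c x, y) - scaleC c (E (x, y)) \<in> W"
    and "\<And>c x y. E (x, scaleC c y) - scaleC c (E (x, y)) \<in> W"
  shows "maps_into rel2 E W"
  unfolding maps_into_def rel2_def using assms by (auto simp: lin_ext_rel_add lin_ext_rel_scaleC)

lemma maps_into_rel3I:
  assumes "\<And>x x' y z. E (x + x', y, z) - E (x, y, z) - E (x', y, z) \<in> W"
    and "\<And>x y y' z. E (x, y + y', z) - E (x, y, z) - E (x, y', z) \<in> W"
    and "\<And>x y z z'. E (x, y, z + z') - E (x, y, z) - E (x, y, z') \<in> W"
    and "\<And>c x y z. E (scaleC c x, y, z) - scaleC c (E (x, y, z)) \<in> W"
    and "\<And>c x y z. E (x, scaleC c y, z) - scaleC c (E (x, y, z)) \<in> W"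
    and "\<And>c x y z. E (x, y, scaleC c z) - scaleC c (E (x, y, z)) \<in> W"
  shows "maps_into rel3 E W"
  unfolding maps_into_def rel3_def using assms by (auto simp: lin_ext_rel_add lin_ext_rel_scaleC)

lemma maps_into_relB2I:
  assumes "maps_into rel2 E W" "\<And>x y b. b \<in> B \<Longrightarrow> E (x * b, y) - E (x, b * y) \<in> W"
  shows "maps_into (relB2 B) E W"
  using assms unfolding maps_into_def relB2_def by (auto simp: lin_ext_rel)

lemma maps_into_relB3I:
  assumes "maps_into rel3 E W" "\<And>z x y b. b \<in> B \<Longrightarrow> E (z, x * b, y) - E (z, x, b * y) \<in> W"
  shows "maps_into (relB3 B) E W"
  using assms unfolding maps_into_def relB3_def by (auto simp: lin_ext_rel)

lemma teq_append_diff_mem_cspan: "teq R xs (ys @ zs) \<Longrightarrow> fsum xs - fsum ys - fsum zs \<in> cspan R"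
  by (simp add: teq_iff_eq_mod eq_mod_def fsum_append algebra_simps)

lemma descends_rel2I:
  assumes "\<And>x x' y. teq R' (F (x + x', y)) (F (x, y) @ F (x', y))"
    and "\<And>x y y'. teq R' (F (x, y + y')) (F (x, y) @ F (x, y'))"
    and "\<And>c x y. eq_mod R' (fsum (F (scaleC c x, y))) (scaleC c (fsum (F (x, y))))"
    and "\<And>c x y. eq_mod R' (fsum (F (x, scaleC c y))) (scaleC c (fsum (F (x, y))))"
  shows "descends rel2 R' F"
  unfolding descends_def
  by (rule maps_into_rel2I) (use assms in \<open>auto intro: teq_append_diff_mem_cspan simp: eq_mod_def\<close>)

lemma descends_rel3I:
  assumes "\<And>x x' y z. teq R' (F (x + x', y, z)) (F (x, y, z) @ F (x', y, z))"
    and "\<And>x y y' z. teq R' (F (x, y + y', z)) (F (x, y, z) @ F (x, y', z))"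
    and "\<And>x y z z'. teq R' (F (x, y, z + z')) (F (x, y, z) @ F (x, y, z'))"
    and "\<And>c x y z. eq_mod R' (fsum (F (scaleC c x, y, z))) (scaleC c (fsum (F (x, y, z))))"
    and "\<And>c x y z. eq_mod R' (fsum (F (x, scaleC c y, z))) (scaleC c (fsum (F (x, y, z))))"
    and "\<And>c x y z. eq_mod R' (fsum (F (x, y, scaleC c z))) (scaleC c (fsum (F (x, y, z))))"
  shows "descends rel3 R' F"
  unfolding descends_def
  by (rule maps_into_rel3I) (use assms in \<open>auto intro: teq_append_diff_mem_cspan simp: eq_mod_def\<close>)

lemma descends_relB2I:
  assumes "descends rel2 R' F" "\<And>x y b. b \<in> B \<Longrightarrow> teq R' (F (x * b, y)) (F (x, b * y))"
  shows "descends (relB2 B) R' F"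
  using assms unfolding descends_def
  by (intro maps_into_relB2I) (auto simp: teq_iff_eq_mod eq_mod_def)

lemma descends_relB3I:
  assumes "descends rel3 R' F" "\<And>z x y b. b \<in> B \<Longrightarrow> teq R' (F (z, x * b, y)) (F (z, x, b * y))"
  shows "descends (relB3 B) R' F"
  using assms unfolding descends_def
  by (intro maps_into_relB3I) (auto simp: teq_iff_eq_mod eq_mod_def)

definition bilinearC :: "('a::complex_vector \<Rightarrow> 'b::complex_vector \<Rightarrow> 'v::complex_vector) \<Rightarrow> bool" where
  "bilinearC g \<longleftrightarrow> (\<forall>x x' y. g (x + x') y = g x y + g x' y) \<and> (\<forall>x y y'. g x (y + y') = g x y + g x y')
     \<and> (\<forall>c x y. g (scaleC c x) y = scaleC c (g x y)) \<and> (\<forall>c x y. g x (scaleC c y) = scaleC c (g x y))"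

definition trilinearC ::
  "('a::complex_vector \<Rightarrow> 'b::complex_vector \<Rightarrow> 'c::complex_vector \<Rightarrow> 'v::complex_vector) \<Rightarrow> bool" where
  "trilinearC g \<longleftrightarrow> (\<forall>x x' y z. g (x + x') y z = g x y z + g x' y z)
     \<and> (\<forall>x y y' z. g x (y + y') z = g x y z + g x y' z) \<and> (\<forall>x y z z'. g x y (z + z') = g x y z + g x y z')
     \<and> (\<forall>c x y z. g (scaleC c x) y z = scaleC c (g x y z))
     \<and> (\<forall>c x y z. g x (scaleC c y) z = scaleC c (g x y z))
     \<and> (\<forall>c x y z. g x y (scaleC c z) = scaleC c (g x y z))"

lemma bilinearC_sum_list_eq:
  "bilinearC g \<Longrightarrow> teq rel2 xs ys \<Longrightarrow>
     sum_list (map (\<lambda>(u, v). g u v) xs) = sum_list (map (\<lambda>(u, v). g u v) ys)"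
  by (rule sum_list_eq_if_teq, rule maps_into_rel2I) (auto simp: bilinearC_def)

lemma trilinearC_sum_list_eq:
  "trilinearC g \<Longrightarrow> teq rel3 xs ys \<Longrightarrow>
     sum_list (map (\<lambda>(u, v, w). g u v w) xs) = sum_list (map (\<lambda>(u, v, w). g u v w) ys)"
  by (rule sum_list_eq_if_teq, rule maps_into_rel3I) (auto simp: trilinearC_def)

lemma concat_map_singleton_pair: "concat (map (\<lambda>(u, v). [f u v]) xs) = map (\<lambda>(u, v). f u v) xs"
  by (induction xs) auto

lemma concat_concat_map: "concat (concat xss) = concat (map concat xss)"
  by (induction xss) auto

lemma concat_map_concat_map:
  "concat (map F (concat (map G xs))) = concat (map (\<lambda>p. concat (map F (G p))) xs)"
  by (induction xs) auto

lemma eq_mod_concat_map_scaleC: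
  assumes "\<And>p. p \<in> set xs \<Longrightarrow> eq_mod R (fsum (F p)) (scaleC c (fsum (G p)))"
  shows "eq_mod R (fsum (concat (map F xs))) (scaleC c (fsum (concat (map G xs))))"
  using assms
proof (induction xs)
  case Nil
  then show ?case by simp
next
  case (Cons p xs)
  have "eq_mod R (fsum (F p)) (scaleC c (fsum (G p)))"
    by (rule Cons.prems) simp
  moreover have "eq_mod R (fsum (concat (map F xs))) (scaleC c (fsum (concat (map G xs))))"
    by (rule Cons.IH) (rule Cons.prems, simp)
  ultimately have "eq_mod R (fsum (F p) + fsum (concat (map F xs)))
      (scaleC c (fsum (G p)) + scaleC c (fsum (concat (map G xs))))"
    by (rule eq_mod_add)
  then show ?case
    by (simp only: list.map concat.simps fsum_append scaleC_add_right)
qed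

lemma eq_mod_map_scaleC:
  "(\<And>u v. eq_mod R (fsum [f u v]) (scaleC c (fsum [g u v]))) \<Longrightarrow>
     eq_mod R (fsum (map (\<lambda>(u, v). f u v) xs)) (scaleC c (fsum (map (\<lambda>(u, v). g u v) xs)))"
  using eq_mod_concat_map_scaleC[of xs R "\<lambda>(u, v). [f u v]" c "\<lambda>(u, v). [g u v]"]
  by (auto simp: concat_map_singleton_pair)

lemma teq_map_add:
  assumes "\<And>u v. teq R [f u v] [g u v, h u v]"
  shows "teq R (map (\<lambda>(u, v). f u v) xs) (map (\<lambda>(u, v). g u v) xs @ map (\<lambda>(u, v). h u v) xs)"
proof (induction xs)
  case Nil
  then show ?case by simp
next
  case (Cons p xs)
  obtain u v where p: "p = (u, v)"
    by (cases p)
  have "teq R (f u v # map (\<lambda>(u, v). f u v) xs)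
      ([g u v, h u v] @ map (\<lambda>(u, v). g u v) xs @ map (\<lambda>(u, v). h u v) xs)"
    using teq_append[OF assms Cons.IH] by simp
  then show ?case
    by (simp add: p teq_iff_eq_mod fsum_Cons fsum_append add_ac)
qed

lemma rel3_sum_list_3: "teq rel3 (map (\<lambda>z. (x, y, z)) zs) [(x, y, sum_list zs)]"
proof (induction zs)
  case Nil
  have "eq_mod rel3 (fsum [(x, y, scaleC 0 0)]) (scaleC 0 (fsum [(x, y, 0)]))"
    by (rule rel3_scaleC_3)
  then show ?case
    by (simp add: teq_iff_eq_mod) (rule eq_mod_sym)
next
  case (Cons z zs)
  have "teq rel3 ((x, y, z) # map (\<lambda>z. (x, y, z)) zs) [(x, y, z), (x, y, sum_list zs)]"
    using teq_append[OF teq_refl[of rel3 "[(x, y, z)]"] Cons.IH] by simp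
  then show ?case
    using teq_trans teq_sym[OF rel3_add_3] by fastforce
qed

lemma rel3_sum_list_2: "teq rel3 (map (\<lambda>y. (x, y, z)) ys) [(x, sum_list ys, z)]"
proof (induction ys)
  case Nil
  have "eq_mod rel3 (fsum [(x, scaleC 0 0, z)]) (scaleC 0 (fsum [(x, 0, z)]))"
    by (rule rel3_scaleC_2)
  then show ?case
    by (simp add: teq_iff_eq_mod) (rule eq_mod_sym)
next
  case (Cons y ys)
  have "teq rel3 ((x, y, z) # map (\<lambda>y. (x, y, z)) ys) [(x, y, z), (x, sum_list ys, z)]"
    using teq_append[OF teq_refl[of rel3 "[(x, y, z)]"] Cons.IH] by simp
  then show ?case
    using teq_trans teq_sym[OF rel3_add_2] by fastforce
qed

lemma rel3_scaleC_swap_23: "teq rel3 [(x, scaleC c y, z)] [(x, y, scaleC c z)]"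
  unfolding teq_iff_eq_mod by (rule eq_mod_trans[OF rel3_scaleC_2 eq_mod_sym[OF rel3_scaleC_3]])

section \<open>Hopf algebras\<close>

lemma sum_list_map_concat: "sum_list (map f (concat xss)) = sum_list (map (\<lambda>xs. sum_list (map f xs)) xss)"
  by (induction xss) auto

locale hopf_alg =
  fixes \<Delta> :: "'h::complex_algebra_1 \<Rightarrow> ('h \<times> 'h) list"
    and \<epsilon> :: "'h \<Rightarrow> complex"
    and S :: "'h \<Rightarrow> 'h"
  assumes hopf_algebra: "hopf_algebra \<Delta> \<epsilon> S"
begin

lemma counit_add: "\<epsilon> (x + y) = \<epsilon> x + \<epsilon> y"
  using hopf_algebra by (simp add: hopf_algebra_def linearC_def)

lemma counit_scaleC: "\<epsilon> (scaleC c x) = c * \<epsilon> x"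
  using hopf_algebra by (simp add: hopf_algebra_def linearC_def)

lemma counit_mult: "\<epsilon> (h * k) = \<epsilon> h * \<epsilon> k"
  using hopf_algebra by (simp add: hopf_algebra_def)

lemma counit_one: "\<epsilon> 1 = 1"
  using hopf_algebra by (simp add: hopf_algebra_def)

lemma antipode_add: "S (x + y) = S x + S y"
  using hopf_algebra by (simp add: hopf_algebra_def linearC_def)

lemma antipode_scaleC: "S (scaleC c x) = scaleC c (S x)"
  using hopf_algebra by (simp add: hopf_algebra_def linearC_def)

lemma comult_coassoc:
  "teq rel3 [(u, v, w). (p, w) \<leftarrow> \<Delta> h, (u, v) \<leftarrow> \<Delta> p] [(u, v, w). (u, q) \<leftarrow> \<Delta> h, (v, w) \<leftarrow> \<Delta> q]"
  using hopf_algebra by (simp add: hopf_algebra_def)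

lemma comult_counit_left: "sum_list (map (\<lambda>(u, v). scaleC (\<epsilon> u) v) (\<Delta> h)) = h"
  using hopf_algebra by (simp add: hopf_algebra_def)

lemma comult_counit_right: "sum_list (map (\<lambda>(u, v). scaleC (\<epsilon> v) u) (\<Delta> h)) = h"
  using hopf_algebra by (simp add: hopf_algebra_def)

lemma comult_mult: "teq rel2 (\<Delta> (h * k)) [(u * u', v * v'). (u, v) \<leftarrow> \<Delta> h, (u', v') \<leftarrow> \<Delta> k]"
  using hopf_algebra by (simp add: hopf_algebra_def)

lemma comult_one: "teq rel2 (\<Delta> 1) [(1, 1)]"
  using hopf_algebra by (simp add: hopf_algebra_def)

text \<open>The Sweedler sum g(h_(1), h_(2)).\<close>

definition sweedler :: "'h \<Rightarrow> ('h \<Rightarrow> 'h \<Rightarrow> 'v::complex_vector) \<Rightarrow> 'v" where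
  "sweedler h g = sum_list (map (\<lambda>(u, v). g u v) (\<Delta> h))"

lemma sweedler_cong: "(\<And>u v. g u v = g' u v) \<Longrightarrow> sweedler h g = sweedler h g'"
  by (simp add: sweedler_def)

lemma sweedler_add: "sweedler h (\<lambda>u v. f u v + g u v) = sweedler h f + sweedler h g"
proof -
  have "sum_list (map (\<lambda>(u, v). f u v + g u v) xs)
      = sum_list (map (\<lambda>(u, v). f u v) xs) + sum_list (map (\<lambda>(u, v). g u v) xs)" for xs
    by (induction xs) (auto simp: add_ac)
  then show ?thesis
    by (simp add: sweedler_def)
qed

lemma sweedler_scaleC: "sweedler h (\<lambda>u v. scaleC c (f u v)) = scaleC c (sweedler h f)"
proof -
  have "sum_list (map (\<lambda>(u, v). scaleC c (f u v)) xs) = scaleC c (sum_list (map (\<lambda>(u, v). f u v) xs))" for xs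
    by (induction xs) (auto simp: scaleC_add_right)
  then show ?thesis
    by (simp add: sweedler_def)
qed

lemma sweedler_mult_left:
  fixes f :: "'h \<Rightarrow> 'h \<Rightarrow> 'h"
  shows "a * sweedler h f = sweedler h (\<lambda>u v. a * f u v)"
proof -
  have "a * sum_list (map (\<lambda>(u, v). f u v) xs) = sum_list (map (\<lambda>(u, v). a * f u v) xs)" for xs
    by (induction xs) (auto simp: distrib_left)
  then show ?thesis
    by (simp add: sweedler_def)
qed

lemma sweedler_mult_right:
  fixes f :: "'h \<Rightarrow> 'h \<Rightarrow> 'h"
  shows "sweedler h f * a = sweedler h (\<lambda>u v. f u v * a)"
proof -
  have "sum_list (map (\<lambda>(u, v). f u v) xs) * a = sum_list (map (\<lambda>(u, v). f u v * a) xs)" for xs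
    by (induction xs) (auto simp: distrib_right)
  then show ?thesis
    by (simp add: sweedler_def)
qed

lemma sweedler_additive:
  assumes "\<And>x y. L (x + y) = L x + L y"
  shows "L (sweedler h f) = sweedler h (\<lambda>u v. L (f u v))"
  unfolding sweedler_def by (subst additive_sum_list[of L, OF assms]) (simp add: o_def case_prod_unfold)

lemma sweedler_mult:
  assumes "bilinearC g"
  shows "sweedler (h * k) g = sweedler h (\<lambda>u v. sweedler k (\<lambda>u' v'. g (u * u') (v * v')))"
  unfolding sweedler_def using bilinearC_sum_list_eq[OF assms comult_mult[of h k]]
  by (simp add: sum_list_map_concat o_def case_prod_unfold)

lemma sweedler_one:
  assumes "bilinearC g"
  shows "sweedler 1 g = g 1 1"
  unfolding sweedler_def using bilinearC_sum_list_eq[OF assms comult_one] by simp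

lemma sweedler_coassoc:
  assumes "trilinearC g"
  shows "sweedler h (\<lambda>p w. sweedler p (\<lambda>u v. g u v w)) = sweedler h (\<lambda>u q. sweedler q (\<lambda>v w. g u v w))"
  unfolding sweedler_def using trilinearC_sum_list_eq[OF assms comult_coassoc[of h]]
  by (simp add: sum_list_map_concat o_def case_prod_unfold)

lemma sweedler_counit_left:
  assumes "\<And>x y. L (x + y) = L x + L y" "\<And>c x. L (scaleC c x) = scaleC c (L x)"
  shows "sweedler h (\<lambda>p w. scaleC (\<epsilon> p) (L w)) = L h"
  using sweedler_additive[of L h "\<lambda>u v. scaleC (\<epsilon> u) v", OF assms(1)]
  by (simp add: sweedler_def comult_counit_left assms(2))

lemma sweedler_counit_right:
  assumes "\<And>x y. L (x + y) = L x + L y" "\<And>c x. L (scaleC c x) = scaleC c (L x)"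
  shows "sweedler h (\<lambda>p w. scaleC (\<epsilon> w) (L p)) = L h"
  using sweedler_additive[of L h "\<lambda>u v. scaleC (\<epsilon> v) u", OF assms(1)]
  by (simp add: sweedler_def comult_counit_right assms(2))

lemma sweedler_antipode_left: "sweedler h (\<lambda>u v. S u * v) = scaleC (\<epsilon> h) 1"
  using hopf_algebra by (simp add: sweedler_def hopf_algebra_def)

lemma sweedler_antipode_right: "sweedler h (\<lambda>u v. u * S v) = scaleC (\<epsilon> h) 1"
  using hopf_algebra by (simp add: sweedler_def hopf_algebra_def)

lemma sweedler_antipode_left_between: "sweedler h (\<lambda>u v. x * S u * v * y) = scaleC (\<epsilon> h) (x * y)"
proof -
  have "sweedler h (\<lambda>u v. x * S u * v * y) = x * sweedler h (\<lambda>u v. S u * v) * y"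
    by (simp add: sweedler_mult_left sweedler_mult_right mult.assoc)
  then show ?thesis
    by (simp add: sweedler_antipode_left mult_scaleC_left mult_scaleC_right)
qed

lemmas linear_simps = distrib_left distrib_right antipode_add antipode_scaleC mult_scaleC_left
  mult_scaleC_right sweedler_add sweedler_scaleC scaleC_add_right scaleC_add_left counit_add
  counit_scaleC scaleC_scaleC

lemma antipode_mult: "S (h * k) = S k * S h"
proof -
  have "S k * S h = sweedler k (\<lambda>k1 k2. scaleC (\<epsilon> k2) (S k1)) * sweedler h (\<lambda>h1 h2. scaleC (\<epsilon> h2) (S h1))"
    using sweedler_counit_right[of S] by (simp add: antipode_add antipode_scaleC)
  also have "\<dots> = sweedler k (\<lambda>k1 k2. sweedler h (\<lambda>h1 h2. scaleC (\<epsilon> k2) (S k1) * scaleC (\<epsilon> h2) (S h1)))"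
    by (simp only: sweedler_mult_right) (simp only: sweedler_mult_left)
  also have "\<dots> = sweedler k (\<lambda>k1 k2. sweedler h (\<lambda>h1 h2. S k1 * S h1 * sweedler (h2 * k2) (\<lambda>a b. a * S b)))"
    by (simp add: sweedler_antipode_right counit_mult mult_scaleC_left mult_scaleC_right scaleC_scaleC
        mult.commute)
  also have "\<dots> = sweedler k (\<lambda>k1 k2. sweedler h (\<lambda>h1 h2.
      sweedler h2 (\<lambda>a b. S k1 * S h1 * a * sweedler k2 (\<lambda>a' b'. a' * S (b * b')))))"
    by (simp add: sweedler_mult bilinearC_def linear_simps sweedler_mult_left mult.assoc)
  also have "\<dots> = sweedler k (\<lambda>k1 k2. sweedler h (\<lambda>p w.
      sweedler p (\<lambda>u v. S k1 * S u * v * sweedler k2 (\<lambda>a' b'. a' * S (w * b')))))"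
    by (intro sweedler_coassoc[symmetric] sweedler_cong)
      (simp add: trilinearC_def linear_simps sweedler_mult_left sweedler_mult_right)
  also have "\<dots> = sweedler k (\<lambda>k1 k2. sweedler h (\<lambda>p w.
      scaleC (\<epsilon> p) (S k1 * sweedler k2 (\<lambda>a' b'. a' * S (w * b')))))"
    by (simp add: sweedler_antipode_left_between)
  also have "\<dots> = sweedler k (\<lambda>k1 k2. S k1 * sweedler k2 (\<lambda>a' b'. a' * S (h * b')))"
    by (intro sweedler_cong sweedler_counit_left) (simp_all add: linear_simps sweedler_mult_left)
  also have "\<dots> = sweedler k (\<lambda>p w. sweedler p (\<lambda>u v. S u * v * S (h * w)))"
    by (simp add: sweedler_mult_left mult.assoc sweedler_coassoc trilinearC_def linear_simps)
  also have "\<dots> = S (h * k)"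
    using sweedler_antipode_left_between[of _ 1] by (simp add: sweedler_counit_left linear_simps)
  finally show ?thesis ..
qed

lemma antipode_one: "S 1 = 1"
  using sweedler_one[of "\<lambda>u v. S u * v"]
  by (simp add: bilinearC_def linear_simps sweedler_antipode_left counit_one scaleC_one)

end

locale hopf_alg_bij = hopf_alg +
  fixes Sinv
  assumes antipode_inverse: "\<forall>h. S (Sinv h) = h \<and> Sinv (S h) = h"
begin

lemma S_Sinv [simp]: "S (Sinv h) = h"
  using antipode_inverse by simp

lemma Sinv_S [simp]: "Sinv (S h) = h"
  using antipode_inverse by simp

lemma Sinv_add: "Sinv (x + y) = Sinv x + Sinv y"
  by (metis antipode_add S_Sinv Sinv_S)

lemma Sinv_scaleC: "Sinv (scaleC c x) = scaleC c (Sinv x)"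
  by (metis antipode_scaleC S_Sinv Sinv_S)

lemma Sinv_one: "Sinv 1 = 1"
  by (metis antipode_one Sinv_S)

lemma Sinv_mult: "Sinv (h * k) = Sinv k * Sinv h"
  by (metis antipode_mult S_Sinv Sinv_S)

lemma sweedler_Sinv_left: "sweedler h (\<lambda>u v. Sinv v * u) = scaleC (\<epsilon> h) 1"
proof -
  have "sweedler h (\<lambda>u v. Sinv v * u) = Sinv (sweedler h (\<lambda>u v. S u * v))"
    by (simp add: sweedler_additive[OF Sinv_add] Sinv_mult)
  then show ?thesis
    by (simp add: sweedler_antipode_left Sinv_scaleC Sinv_one)
qed

lemma sweedler_Sinv_right: "sweedler h (\<lambda>u v. v * Sinv u) = scaleC (\<epsilon> h) 1"
proof -
  have "sweedler h (\<lambda>u v. v * Sinv u) = Sinv (sweedler h (\<lambda>u v. u * S v))"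
    by (simp add: sweedler_additive[OF Sinv_add] Sinv_mult)
  then show ?thesis
    by (simp add: sweedler_antipode_right Sinv_scaleC Sinv_one)
qed

end

locale comodule_alg =
  fixes \<Delta> :: "'h::complex_algebra_1 \<Rightarrow> ('h \<times> 'h) list"
    and \<epsilon> :: "'h \<Rightarrow> complex"
    and \<delta> :: "'a::complex_algebra_1 \<Rightarrow> ('a \<times> 'h) list"
  assumes comodule_algebra: "comodule_algebra \<Delta> \<epsilon> \<delta>"
begin

lemma coaction_add: "teq rel2 (\<delta> (x + y)) (\<delta> x @ \<delta> y)"
  using comodule_algebra by (simp add: comodule_algebra_def linear2_def)

lemma coaction_scaleC: "teq rel2 (\<delta> (scaleC c x)) (map (\<lambda>(u, v). (scaleC c u, v)) (\<delta> x))"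
  using comodule_algebra by (simp add: comodule_algebra_def linear2_def)

lemma coaction_coassoc:
  "teq rel3 [(x, h, k). (y, k) \<leftarrow> \<delta> a, (x, h) \<leftarrow> \<delta> y] [(x, h, k). (x, g) \<leftarrow> \<delta> a, (h, k) \<leftarrow> \<Delta> g]"
  using comodule_algebra by (simp add: comodule_algebra_def)

lemma coaction_counit: "sum_list (map (\<lambda>(x, h). scaleC (\<epsilon> h) x) (\<delta> a)) = a"
  using comodule_algebra by (simp add: comodule_algebra_def)

lemma coaction_mult: "teq rel2 (\<delta> (a * a')) [(x * y, h * k). (x, h) \<leftarrow> \<delta> a, (y, k) \<leftarrow> \<delta> a']"
  using comodule_algebra by (simp add: comodule_algebra_def)

lemma coaction_one: "teq rel2 (\<delta> 1) [(1, 1)]"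
  using comodule_algebra by (simp add: comodule_algebra_def)

lemma teq_map_coaction_add:
  assumes "descends rel2 R' (\<lambda>(u, v). [f u v])"
  shows "teq R' (map (\<lambda>(u, v). f u v) (\<delta> (x + y)))
    (map (\<lambda>(u, v). f u v) (\<delta> x) @ map (\<lambda>(u, v). f u v) (\<delta> y))"
  using teq_concat_map_descends[OF assms coaction_add] by (simp add: concat_map_singleton_pair)

lemma eq_mod_map_coaction_scaleC:
  assumes "descends rel2 R' (\<lambda>(u, v). [f u v])"
    and "\<And>u v. eq_mod R' (fsum [f (scaleC c u) v]) (scaleC c (fsum [f u v]))"
  shows "eq_mod R' (fsum (map (\<lambda>(u, v). f u v) (\<delta> (scaleC c y))))
    (scaleC c (fsum (map (\<lambda>(u, v). f u v) (\<delta> y))))"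
proof -
  have "teq R' (map (\<lambda>(u, v). f u v) (\<delta> (scaleC c y))) (map (\<lambda>(u, v). f (scaleC c u) v) (\<delta> y))"
    using teq_concat_map_descends[OF assms(1) coaction_scaleC]
    by (simp add: concat_map_singleton_pair o_def case_prod_unfold)
  moreover have "eq_mod R' (fsum (map (\<lambda>(u, v). f (scaleC c u) v) (\<delta> y)))
      (scaleC c (fsum (map (\<lambda>(u, v). f u v) (\<delta> y))))"
    by (rule eq_mod_map_scaleC) (rule assms(2))
  ultimately show ?thesis
    unfolding teq_iff_eq_mod by (rule eq_mod_trans)
qed

end

section \<open>The cotensor product is the space of coinvariants\<close>

locale hopf_comodule_alg = hopf_alg_bij \<Delta> \<epsilon> S Sinv + comodule_alg \<Delta> \<epsilon> \<delta>
  for \<Delta> :: "'h::complex_algebra_1 \<Rightarrow> ('h \<times> 'h) list" and \<epsilon> S Sinv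
    and \<delta> :: "'a::complex_algebra_1 \<Rightarrow> ('a \<times> 'h) list"
begin

lemma descends_coaction_twist:
  "descends rel3 rel3 (\<lambda>(x :: 'v::complex_vector, h, a'). map (\<lambda>(y, k). (x, y, h * k)) (\<delta> a'))"
proof (rule descends_rel3I, goal_cases)
  have lin: "descends rel2 rel3 (\<lambda>(y, k). [(x, y, h * k)])" for x :: 'v and h :: 'h
    by (rule descends_rel2I)
      (simp_all add: rel3_add_2 rel3_add_3 rel3_scaleC_2 rel3_scaleC_3 distrib_left mult_scaleC_right)
  {
    case 1
    show ?case by (simp only: prod.case) (rule teq_map_add, rule rel3_add_1)
  next
    case 2
    show ?case by (simp only: prod.case distrib_right) (rule teq_map_add, rule rel3_add_3)
  next
    case (3 x h a' a'')
    show ?case by (simp only: prod.case) (rule teq_map_coaction_add[OF lin])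
  next
    case 4
    show ?case by (simp only: prod.case) (rule eq_mod_map_scaleC, rule rel3_scaleC_1)
  next
    case 5
    show ?case by (simp only: prod.case mult_scaleC_left) (rule eq_mod_map_scaleC, rule rel3_scaleC_3)
  next
    case 6
    show ?case by (simp only: prod.case) (rule eq_mod_map_coaction_scaleC[OF lin], rule rel3_scaleC_2)
  }
qed

lemma descends_Sinv_coaction_twist:
  "descends rel3 rel3 (\<lambda>(x :: 'v::complex_vector, y, h). map (\<lambda>(z, k). (x, h * Sinv k, z)) (\<delta> y))"
proof (rule descends_rel3I, goal_cases)
  have lin: "descends rel2 rel3 (\<lambda>(z, k). [(x, h * Sinv k, z)])" for x :: 'v and h :: 'h
    by (rule descends_rel2I)
      (simp_all add: rel3_add_2 rel3_add_3 rel3_scaleC_2 rel3_scaleC_3 distrib_left Sinv_add Sinv_scaleC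
        mult_scaleC_right)
  {
    case 1
    show ?case by (simp only: prod.case) (rule teq_map_add, rule rel3_add_1)
  next
    case (2 x y y' h)
    show ?case by (simp only: prod.case) (rule teq_map_coaction_add[OF lin])
  next
    case 3
    show ?case by (simp only: prod.case distrib_right) (rule teq_map_add, rule rel3_add_2)
  next
    case 4
    show ?case by (simp only: prod.case) (rule eq_mod_map_scaleC, rule rel3_scaleC_1)
  next
    case 5
    show ?case by (simp only: prod.case) (rule eq_mod_map_coaction_scaleC[OF lin], rule rel3_scaleC_3)
  next
    case 6
    show ?case by (simp only: prod.case mult_scaleC_left) (rule eq_mod_map_scaleC, rule rel3_scaleC_2)
  }
qed

lemma coaction_Sinv_cancel_third:
  "teq rel3 (concat (map (\<lambda>(y, h). map (\<lambda>(y', k). (a, y', Sinv h * k)) (\<delta> y)) (\<delta> a'))) [(a, a', 1)]"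
proof -
  let ?F = "\<lambda>(x, h, k). [(a, x, Sinv k * h)]"
  have lin: "descends rel3 rel3 ?F"
    by (rule descends_rel3I)
      (simp_all add: rel3_add_2 rel3_add_3 rel3_scaleC_2 rel3_scaleC_3 distrib_left distrib_right
        Sinv_add Sinv_scaleC mult_scaleC_left mult_scaleC_right)
  have counit: "teq rel3 (map (\<lambda>(h, k). (a, x, Sinv k * h)) (\<Delta> g)) [(a, scaleC (\<epsilon> g) x, 1)]" for x g
  proof -
    have "teq rel3 (map (\<lambda>z. (a, x, z)) (map (\<lambda>(h, k). Sinv k * h) (\<Delta> g)))
        [(a, x, sum_list (map (\<lambda>(h, k). Sinv k * h) (\<Delta> g)))]"
      by (rule rel3_sum_list_3)
    then have "teq rel3 (map (\<lambda>(h, k). (a, x, Sinv k * h)) (\<Delta> g)) [(a, x, scaleC (\<epsilon> g) 1)]"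
      using sweedler_Sinv_left[of g] by (simp add: sweedler_def o_def case_prod_unfold)
    then show ?thesis
      by (rule teq_trans[OF _ teq_sym[OF rel3_scaleC_swap_23]])
  qed
  have "teq rel3 (concat (map ?F [(x, h, k). (y, k) \<leftarrow> \<delta> a', (x, h) \<leftarrow> \<delta> y]))
      (concat (map ?F [(x, h, k). (x, g) \<leftarrow> \<delta> a', (h, k) \<leftarrow> \<Delta> g]))"
    by (rule teq_concat_map_descends[OF lin coaction_coassoc])
  then have "teq rel3 (concat (map (\<lambda>(y, h). map (\<lambda>(y', k). (a, y', Sinv h * k)) (\<delta> y)) (\<delta> a')))
      (concat (map (\<lambda>(x, g). map (\<lambda>(h, k). (a, x, Sinv k * h)) (\<Delta> g)) (\<delta> a')))"
    by (simp add: map_concat concat_concat_map o_def case_prod_unfold)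
  also have "teq rel3 \<dots> (map (\<lambda>y. (a, y, 1)) (map (\<lambda>(x, g). scaleC (\<epsilon> g) x) (\<delta> a')))"
    using teq_concat_map[of "\<delta> a'" rel3 "\<lambda>(x, g). map (\<lambda>(h, k). (a, x, Sinv k * h)) (\<Delta> g)"
        "\<lambda>(x, g). [(a, scaleC (\<epsilon> g) x, 1)]"] counit
    by (auto simp: concat_map_singleton_pair o_def case_prod_unfold split: prod.splits)
  also have "teq rel3 \<dots> [(a, a', 1)]"
    using rel3_sum_list_2[where x = a and z = 1 and ys = "map (\<lambda>(x, g). scaleC (\<epsilon> g) x) (\<delta> a')"]
    by (simp add: coaction_counit)
  finally show ?thesis .
qed

lemma coaction_Sinv_cancel_second:
  "teq rel3 (concat (map (\<lambda>(y, k). map (\<lambda>(z, k'). (x, h * k * Sinv k', z)) (\<delta> y)) (\<delta> a'))) [(x, h, a')]"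
proof -
  let ?F = "\<lambda>(z, k', k). [(x, h * k * Sinv k', z)]"
  have lin: "descends rel3 rel3 ?F"
    by (rule descends_rel3I)
      (simp_all add: rel3_add_2 rel3_add_3 rel3_scaleC_2 rel3_scaleC_3 distrib_left distrib_right
        Sinv_add Sinv_scaleC mult_scaleC_left mult_scaleC_right)
  have counit: "teq rel3 (map (\<lambda>(k', k). (x, h * k * Sinv k', z)) (\<Delta> g)) [(x, h, scaleC (\<epsilon> g) z)]" for z g
  proof -
    have "teq rel3 (map (\<lambda>y. (x, y, z)) (map (\<lambda>(k', k). h * k * Sinv k') (\<Delta> g)))
        [(x, sum_list (map (\<lambda>(k', k). h * k * Sinv k') (\<Delta> g)), z)]"
      by (rule rel3_sum_list_2)
    moreover have "sum_list (map (\<lambda>(k', k). h * k * Sinv k') (\<Delta> g)) = h * sweedler g (\<lambda>u v. v * Sinv u)"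
      by (simp add: sweedler_mult_left) (simp add: sweedler_def mult.assoc)
    ultimately have "teq rel3 (map (\<lambda>(k', k). (x, h * k * Sinv k', z)) (\<Delta> g)) [(x, scaleC (\<epsilon> g) h, z)]"
      by (simp add: sweedler_Sinv_right mult_scaleC_right o_def case_prod_unfold)
    then show ?thesis
      by (rule teq_trans[OF _ rel3_scaleC_swap_23])
  qed
  have "teq rel3 (concat (map ?F [(x, h, k). (y, k) \<leftarrow> \<delta> a', (x, h) \<leftarrow> \<delta> y]))
      (concat (map ?F [(x, h, k). (x, g) \<leftarrow> \<delta> a', (h, k) \<leftarrow> \<Delta> g]))"
    by (rule teq_concat_map_descends[OF lin coaction_coassoc])
  then have "teq rel3 (concat (map (\<lambda>(y, k). map (\<lambda>(z, k'). (x, h * k * Sinv k', z)) (\<delta> y)) (\<delta> a')))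
      (concat (map (\<lambda>(z, g). map (\<lambda>(k', k). (x, h * k * Sinv k', z)) (\<Delta> g)) (\<delta> a')))"
    by (simp add: map_concat concat_concat_map o_def case_prod_unfold)
  also have "teq rel3 \<dots> (map (\<lambda>z. (x, h, z)) (map (\<lambda>(z, g). scaleC (\<epsilon> g) z) (\<delta> a')))"
    using teq_concat_map[of "\<delta> a'" rel3 "\<lambda>(z, g). map (\<lambda>(k', k). (x, h * k * Sinv k', z)) (\<Delta> g)"
        "\<lambda>(z, g). [(x, h, scaleC (\<epsilon> g) z)]"] counit
    by (auto simp: concat_map_singleton_pair o_def case_prod_unfold split: prod.splits)
  also have "teq rel3 \<dots> [(x, h, a')]"
    using rel3_sum_list_3[where x = x and y = h and zs = "map (\<lambda>(z, g). scaleC (\<epsilon> g) z) (\<delta> a')"]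
    by (simp add: coaction_counit)
  finally show ?thesis .
qed

lemma cotensor_subset_tensor_coinv: "cotensor \<delta> Sinv \<subseteq> tensor_coinv \<delta>"
proof
  fix X
  let ?twist = "\<lambda>(x, h, a'). map (\<lambda>(y, k). (x, y, h * k)) (\<delta> a')"
  assume "X \<in> cotensor \<delta> Sinv"
  then have "teq rel3 [(x, h, a'). (a, a') \<leftarrow> X, (x, h) \<leftarrow> \<delta> a] [(a, Sinv h, y). (a, a') \<leftarrow> X, (y, h) \<leftarrow> \<delta> a']"
    by (simp add: cotensor_def)
  then have "teq rel3 (concat (map ?twist [(x, h, a'). (a, a') \<leftarrow> X, (x, h) \<leftarrow> \<delta> a]))
      (concat (map ?twist [(a, Sinv h, y). (a, a') \<leftarrow> X, (y, h) \<leftarrow> \<delta> a']))"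
    by (rule teq_concat_map_descends[OF descends_coaction_twist])
  then have "teq rel3 [(x, y, h * k). (a, a') \<leftarrow> X, (x, h) \<leftarrow> \<delta> a, (y, k) \<leftarrow> \<delta> a']
      (concat (map (\<lambda>(a, a'). concat (map (\<lambda>(y, h). map (\<lambda>(y', k). (a, y', Sinv h * k)) (\<delta> y)) (\<delta> a'))) X))"
    by (simp add: map_concat concat_concat_map o_def case_prod_unfold)
  also have "teq rel3 \<dots> (concat (map (\<lambda>(a, a'). [(a, a', 1)]) X))"
    by (rule teq_concat_map) (auto split: prod.splits intro: coaction_Sinv_cancel_third)
  finally show "X \<in> tensor_coinv \<delta>"
    by (simp add: tensor_coinv_def concat_map_singleton_pair)
qed

lemma tensor_coinv_subset_cotensor: "tensor_coinv \<delta> \<subseteq> cotensor \<delta> Sinv"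
proof
  fix X
  let ?twist = "\<lambda>(x, y, h). map (\<lambda>(z, k). (x, h * Sinv k, z)) (\<delta> y)"
  assume "X \<in> tensor_coinv \<delta>"
  then have "teq rel3 [(x, y, h * k). (a, a') \<leftarrow> X, (x, h) \<leftarrow> \<delta> a, (y, k) \<leftarrow> \<delta> a'] [(a, a', 1). (a, a') \<leftarrow> X]"
    by (simp add: tensor_coinv_def)
  then have "teq rel3 (concat (map ?twist [(x, y, h * k). (a, a') \<leftarrow> X, (x, h) \<leftarrow> \<delta> a, (y, k) \<leftarrow> \<delta> a']))
      (concat (map ?twist [(a, a', 1). (a, a') \<leftarrow> X]))"
    by (rule teq_concat_map_descends[OF descends_Sinv_coaction_twist])
  then have "teq rel3
      (concat (map (\<lambda>(a, a'). concat (map (\<lambda>(x, h). concat (map (\<lambda>(y, k).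
         map (\<lambda>(z, k'). (x, h * k * Sinv k', z)) (\<delta> y)) (\<delta> a'))) (\<delta> a))) X))
      [(a, Sinv h, y). (a, a') \<leftarrow> X, (y, h) \<leftarrow> \<delta> a']"
    by (simp add: map_concat concat_concat_map o_def case_prod_unfold)
  moreover have "teq rel3
      (concat (map (\<lambda>(a, a'). concat (map (\<lambda>(x, h). concat (map (\<lambda>(y, k).
         map (\<lambda>(z, k'). (x, h * k * Sinv k', z)) (\<delta> y)) (\<delta> a'))) (\<delta> a))) X))
      (concat (map (\<lambda>(a, a'). concat (map (\<lambda>(x, h). [(x, h, a')]) (\<delta> a))) X))"
    by (auto split: prod.splits intro!: teq_concat_map coaction_Sinv_cancel_second)
  ultimately show "X \<in> cotensor \<delta> Sinv"
    by (simp add: cotensor_def concat_map_singleton_pair) (meson teq_sym teq_trans)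
qed

lemma cotensor_eq_tensor_coinv: "cotensor \<delta> Sinv = tensor_coinv \<delta>"
  using cotensor_subset_tensor_coinv tensor_coinv_subset_cotensor by (rule antisym)

end

section \<open>Hopf--Galois extensions: the coinvariants are the set C\<close>

lemma descends_insert_mult_left:
  fixes u :: "'a::complex_algebra_1"
  shows "descends rel2 rel3 (\<lambda>(w, k :: 'h::complex_vector). [(x :: 'v::complex_vector, u * w, k)])"
  by (rule descends_rel2I)
    (simp_all add: rel3_add_2 rel3_add_3 rel3_scaleC_2 rel3_scaleC_3 distrib_left mult_scaleC_right)

lemma descends_insert_mult_left_balanced:
  fixes y :: "'a::complex_algebra_1"
  shows "descends (relB2 B) (relB3 B) (\<lambda>(u, v). [(x, y * u, v)])"
proof (rule descends_relB2I)
  show "descends rel2 (relB3 B) (\<lambda>(u, v). [(x, y * u, v)])"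
    by (rule descends_rel2I)
      (simp_all add: teq_mono[OF rel3_subset_relB3] eq_mod_mono[OF rel3_subset_relB3] rel3_add_2 rel3_add_3
        rel3_scaleC_2 rel3_scaleC_3 distrib_left mult_scaleC_right)
  show "teq (relB3 B) ((\<lambda>(u, v). [(x, y * u, v)]) (u * b, v)) ((\<lambda>(u, v). [(x, y * u, v)]) (u, b * v))"
    if "b \<in> B" for u v b
    using relB3_balanced[OF that, of x "y * u" v] by (simp add: mult.assoc)
qed

locale hopf_galois_ext = comodule_alg \<Delta> \<epsilon> \<delta>
  for \<Delta> :: "'h::complex_algebra_1 \<Rightarrow> ('h \<times> 'h) list" and \<epsilon>
    and \<delta> :: "'a::complex_algebra_1 \<Rightarrow> ('a \<times> 'h) list" +
  fixes \<tau> :: "'h \<Rightarrow> ('a \<times> 'a) list"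
  assumes hopf_galois: "hopf_galois \<delta>"
    and translation_map: "translation_map \<delta> \<tau>"
begin

abbreviation B :: "'a set" where
  "B \<equiv> coinvariants \<delta>"

lemma teq_relB2_if_galois_map: "teq rel2 (galois_map \<delta> X) (galois_map \<delta> Y) \<Longrightarrow> teq (relB2 B) X Y"
  using hopf_galois by (simp add: hopf_galois_def)

lemma galois_map_translation: "teq rel2 (galois_map \<delta> (\<tau> h)) [(1, h)]"
  using translation_map by (simp add: translation_map_def)

lemma galois_map_append: "galois_map \<delta> (X @ Y) = galois_map \<delta> X @ galois_map \<delta> Y"
  by (simp add: galois_map_def)

lemma galois_map_one_tensor: "galois_map \<delta> [(1, v)] = \<delta> v"
  by (simp add: galois_map_def case_prod_unfold)

lemma translation_add: "teq (relB2 B) (\<tau> (h + k)) (\<tau> h @ \<tau> k)"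
proof (rule teq_relB2_if_galois_map)
  have "teq rel2 (galois_map \<delta> (\<tau> (h + k))) [(1, h), (1, k)]"
    using teq_trans[OF galois_map_translation rel2_add_right] .
  also have "teq rel2 \<dots> (galois_map \<delta> (\<tau> h) @ galois_map \<delta> (\<tau> k))"
    using teq_append[OF teq_sym[OF galois_map_translation[of h]] teq_sym[OF galois_map_translation[of k]]]
    by simp
  finally show "teq rel2 (galois_map \<delta> (\<tau> (h + k))) (galois_map \<delta> (\<tau> h @ \<tau> k))"
    by (simp only: galois_map_append)
qed

lemma translation_scaleC: "eq_mod (relB2 B) (fsum (\<tau> (scaleC c h))) (scaleC c (fsum (\<tau> h)))"
proof -
  let ?scale = "map (\<lambda>(u, v). (scaleC c u, v))"
  have scale: "eq_mod R (fsum (?scale xs)) (scaleC c (fsum xs))"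
    if "rel2 \<subseteq> R" for R and xs :: "('a \<times> 'b::complex_vector) list"
    using eq_mod_map_scaleC[of R "\<lambda>u v. (scaleC c u, v)" c "\<lambda>u v. (u, v)" xs,
        OF eq_mod_mono[OF that rel2_scaleC_left]]
    by (simp add: case_prod_unfold)
  have "eq_mod rel2 (fsum (galois_map \<delta> (\<tau> (scaleC c h)))) (fsum [(1, scaleC c h)])"
    using galois_map_translation by (simp add: teq_iff_eq_mod)
  also have "eq_mod rel2 \<dots> (scaleC c (fsum [(1, h)]))"
    by (rule rel2_scaleC_right)
  also have "eq_mod rel2 \<dots> (scaleC c (fsum (galois_map \<delta> (\<tau> h))))"
    using galois_map_translation[of h] by (simp add: teq_iff_eq_mod eq_mod_scaleC eq_mod_sym)
  also have "eq_mod rel2 \<dots> (fsum (?scale (galois_map \<delta> (\<tau> h))))"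
    by (rule eq_mod_sym[OF scale]) simp
  also have "\<dots> = fsum (galois_map \<delta> (?scale (\<tau> h)))"
    by (simp add: galois_map_def map_concat o_def case_prod_unfold mult_scaleC_left)
  finally have "teq (relB2 B) (\<tau> (scaleC c h)) (?scale (\<tau> h))"
    by (intro teq_relB2_if_galois_map) (simp add: teq_iff_eq_mod)
  then show ?thesis
    using scale[OF rel2_subset_relB2] unfolding teq_iff_eq_mod by (rule eq_mod_trans)
qed

lemma translation_one: "teq (relB2 B) (\<tau> 1) [(1, 1)]"
  by (rule teq_relB2_if_galois_map)
    (simp only: galois_map_one_tensor teq_trans[OF galois_map_translation teq_sym[OF coaction_one]])

text \<open>v_(0) v_(1)^<1> \<otimes>_B v_(1)^<2> = 1 \<otimes>_B v: apply \<chi>, which is injective.\<close>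

lemma coaction_translation:
  "teq (relB2 B) (concat (map (\<lambda>(w, k). map (\<lambda>(p, q). (w * p, q)) (\<tau> k)) (\<delta> v))) [(1, v)]"
proof (rule teq_relB2_if_galois_map)
  have lin: "descends rel2 rel2 (\<lambda>(s, t). [(w * s, t)])" for w :: 'a
    by (rule descends_rel2I) (simp_all add: rel2_add_left rel2_add_right rel2_scaleC_left rel2_scaleC_right
        distrib_left mult_scaleC_right)
  have "galois_map \<delta> (concat (map (\<lambda>(w, k). map (\<lambda>(p, q). (w * p, q)) (\<tau> k)) (\<delta> v)))
      = concat (map (\<lambda>(w, k). concat (map (\<lambda>(s, t). [(w * s, t)]) (galois_map \<delta> (\<tau> k)))) (\<delta> v))"
    by (simp add: galois_map_def map_concat concat_concat_map o_def case_prod_unfold mult.assoc)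
  also have "teq rel2 \<dots> (concat (map (\<lambda>(w, k). [(w, k)]) (\<delta> v)))"
    using teq_concat_map_descends[OF lin galois_map_translation]
    by (intro teq_concat_map) (auto split: prod.splits)
  also have "\<dots> = galois_map \<delta> [(1, v)]"
    by (simp add: galois_map_one_tensor concat_map_singleton_pair)
  finally show "teq rel2 (galois_map \<delta> (concat (map (\<lambda>(w, k). map (\<lambda>(p, q). (w * p, q)) (\<tau> k)) (\<delta> v))))
      (galois_map \<delta> [(1, v)])" .
qed

lemma coaction_coinvariant_mult:
  assumes "b \<in> B"
  shows "teq rel2 (\<delta> (b * y)) (map (\<lambda>(w, k). (b * w, k)) (\<delta> y))"
proof -
  let ?F = "\<lambda>(p, q). map (\<lambda>(w, k). (p * w, q * k)) (\<delta> y)"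
  have lin: "descends rel2 rel2 ?F"
  proof (rule descends_rel2I, goal_cases)
    case 1
    show ?case by (simp only: prod.case distrib_right) (rule teq_map_add, rule rel2_add_left)
  next
    case 2
    show ?case by (simp only: prod.case distrib_right) (rule teq_map_add, rule rel2_add_right)
  next
    case 3
    show ?case by (simp only: prod.case mult_scaleC_left) (rule eq_mod_map_scaleC, rule rel2_scaleC_left)
  next
    case 4
    show ?case by (simp only: prod.case mult_scaleC_left) (rule eq_mod_map_scaleC, rule rel2_scaleC_right)
  qed
  have "teq rel2 (\<delta> (b * y)) (concat (map ?F (\<delta> b)))"
    using coaction_mult[of b y] by (simp add: o_def case_prod_unfold)
  also have "teq rel2 \<dots> (concat (map ?F [(b, 1)]))"
    using assms by (intro teq_concat_map_descends[OF lin]) (simp add: coinvariants_def)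
  finally show ?thesis
    by simp
qed

lemma descends_translation:
  "descends rel3 (relB3 B) (\<lambda>(x, y, h). map (\<lambda>(u, v). (x, y * u, v)) (\<tau> h))"
proof (rule descends_rel3I, goal_cases)
  case 1
  show ?case by (simp only: prod.case) (rule teq_map_add, rule teq_mono[OF rel3_subset_relB3 rel3_add_1])
next
  case 2
  show ?case
    by (simp only: prod.case distrib_right) (rule teq_map_add, rule teq_mono[OF rel3_subset_relB3 rel3_add_2])
next
  case (3 x y h h')
  show ?case
    using teq_concat_map_descends[OF descends_insert_mult_left_balanced[where x = x and y = y]
        translation_add]
    by (simp only: prod.case concat_map_singleton_pair map_append concat_append)
next
  case 4
  show ?case
    by (simp only: prod.case) (rule eq_mod_map_scaleC, rule eq_mod_mono[OF rel3_subset_relB3 rel3_scaleC_1])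
next
  case 5
  show ?case
    by (simp only: prod.case mult_scaleC_left)
      (rule eq_mod_map_scaleC, rule eq_mod_mono[OF rel3_subset_relB3 rel3_scaleC_2])
next
  case (6 c x y h)
  show ?case
    using eq_mod_concat_map_descends[OF descends_insert_mult_left_balanced[where x = x and y = y]
        translation_scaleC]
    by (simp only: prod.case concat_map_singleton_pair)
qed

lemma descends_galois_map:
  "descends (relB3 B) rel3 (\<lambda>(x, u, v). map (\<lambda>(w, k). (x, u * w, k)) (\<delta> v))"
proof (rule descends_relB3I)
  show "descends rel3 rel3 (\<lambda>(x, u, v). map (\<lambda>(w, k). (x, u * w, k)) (\<delta> v))"
  proof (rule descends_rel3I, goal_cases)
    case 1
    show ?case by (simp only: prod.case) (rule teq_map_add, rule rel3_add_1)
  next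
    case 2
    show ?case by (simp only: prod.case distrib_right) (rule teq_map_add, rule rel3_add_2)
  next
    case 3
    show ?case by (simp only: prod.case) (rule teq_map_coaction_add[OF descends_insert_mult_left])
  next
    case 4
    show ?case by (simp only: prod.case) (rule eq_mod_map_scaleC, rule rel3_scaleC_1)
  next
    case 5
    show ?case by (simp only: prod.case mult_scaleC_left) (rule eq_mod_map_scaleC, rule rel3_scaleC_2)
  next
    case 6
    show ?case
      by (simp only: prod.case)
        (rule eq_mod_map_coaction_scaleC[OF descends_insert_mult_left], simp only: mult_scaleC_right,
          rule rel3_scaleC_2)
  qed
  show "teq rel3 ((\<lambda>(x, u, v). map (\<lambda>(w, k). (x, u * w, k)) (\<delta> v)) (z, x * b, y))
      ((\<lambda>(x, u, v). map (\<lambda>(w, k). (x, u * w, k)) (\<delta> v)) (z, x, b * y))" if "b \<in> B" for z x y b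
  proof -
    have "teq rel3 (concat (map (\<lambda>(w, k). [(z, x * w, k)]) (\<delta> (b * y))))
        (concat (map (\<lambda>(w, k). [(z, x * w, k)]) (map (\<lambda>(w, k). (b * w, k)) (\<delta> y))))"
      by (rule teq_concat_map_descends[OF descends_insert_mult_left coaction_coinvariant_mult[OF that]])
    then show ?thesis
      by (simp add: concat_map_singleton_pair o_def case_prod_unfold mult.assoc teq_sym)
  qed
qed

text \<open>As \<delta> is multiplicative, the left-hand side is x \<otimes> \<chi>(\<tau>(h)) \<delta>(a'), and \<chi>(\<tau>(h)) = 1 \<otimes> h.\<close>

lemma galois_map_translation_mult:
  "teq rel3 (concat (map (\<lambda>(u, v). map (\<lambda>(w, k). (x, u * w, k)) (\<delta> (v * a'))) (\<tau> h)))
     (map (\<lambda>(y, k). (x, y, h * k)) (\<delta> a'))"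
proof -
  let ?F = "\<lambda>(s, t). map (\<lambda>(y, k). (x, s * y, t * k)) (\<delta> a')"
  have lin: "descends rel2 rel3 ?F"
  proof (rule descends_rel2I, goal_cases)
    case 1
    show ?case by (simp only: prod.case distrib_right) (rule teq_map_add, rule rel3_add_2)
  next
    case 2
    show ?case by (simp only: prod.case distrib_right) (rule teq_map_add, rule rel3_add_3)
  next
    case 3
    show ?case by (simp only: prod.case mult_scaleC_left) (rule eq_mod_map_scaleC, rule rel3_scaleC_2)
  next
    case 4
    show ?case by (simp only: prod.case mult_scaleC_left) (rule eq_mod_map_scaleC, rule rel3_scaleC_3)
  qed
  have mult: "teq rel3 (map (\<lambda>(w, k). (x, u * w, k)) (\<delta> (v * a')))
      (concat (map (\<lambda>(p, q). map (\<lambda>(y, k). (x, u * p * y, q * k)) (\<delta> a')) (\<delta> v)))" for u v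
    using teq_concat_map_descends[OF descends_insert_mult_left[where x = x and u = u] coaction_mult[of v a']]
    by (simp add: concat_map_singleton_pair map_concat concat_concat_map o_def case_prod_unfold mult.assoc)
  have "teq rel3 (concat (map (\<lambda>(u, v). map (\<lambda>(w, k). (x, u * w, k)) (\<delta> (v * a'))) (\<tau> h)))
      (concat (map (\<lambda>(u, v).
         concat (map (\<lambda>(p, q). map (\<lambda>(y, k). (x, u * p * y, q * k)) (\<delta> a')) (\<delta> v))) (\<tau> h)))"
    by (rule teq_concat_map) (auto split: prod.splits intro: mult)
  also have "\<dots> = concat (map ?F (galois_map \<delta> (\<tau> h)))"
    by (simp add: galois_map_def map_concat concat_concat_map o_def case_prod_unfold)
  also have "teq rel3 \<dots> (concat (map ?F [(1, h)]))"
    by (rule teq_concat_map_descends[OF lin galois_map_translation])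
  finally show ?thesis
    by simp
qed

lemma galois_map_translation_expansion:
  "teq rel3 (concat (map (\<lambda>(x, u, v). map (\<lambda>(w, k). (x, u * w, k)) (\<delta> v))
       [(x, u, v * a'). (a, a') \<leftarrow> X, (x, h) \<leftarrow> \<delta> a, (u, v) \<leftarrow> \<tau> h]))
     [(x, y, h * k). (a, a') \<leftarrow> X, (x, h) \<leftarrow> \<delta> a, (y, k) \<leftarrow> \<delta> a']"
proof -
  have "concat (map (\<lambda>(x, u, v). map (\<lambda>(w, k). (x, u * w, k)) (\<delta> v))
       [(x, u, v * a'). (a, a') \<leftarrow> X, (x, h) \<leftarrow> \<delta> a, (u, v) \<leftarrow> \<tau> h])
    = concat (map (\<lambda>(a, a'). concat (map (\<lambda>(x, h).
        concat (map (\<lambda>(u, v). map (\<lambda>(w, k). (x, u * w, k)) (\<delta> (v * a'))) (\<tau> h))) (\<delta> a))) X)"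
    by (simp add: map_concat concat_concat_map o_def case_prod_unfold)
  then show ?thesis
    by (simp only:)
      (rule teq_concat_map, auto split: prod.splits intro!: teq_concat_map galois_map_translation_mult)
qed

lemma translation_galois_map_cancel:
  "teq (relB3 B) (concat (map (\<lambda>(x, y, h). map (\<lambda>(u, v). (x, y * u, v)) (\<tau> h))
     (map (\<lambda>(w, k). (x, u * w, k)) (\<delta> v)))) [(x, u, v)]"
proof -
  have "teq (relB3 B)
      (concat (map (\<lambda>(s, t). [(x, u * s, t)])
         (concat (map (\<lambda>(w, k). map (\<lambda>(p, q). (w * p, q)) (\<tau> k)) (\<delta> v)))))
      (concat (map (\<lambda>(s, t). [(x, u * s, t)]) [(1, v)]))"
    by (rule teq_concat_map_descends[OF descends_insert_mult_left_balanced coaction_translation])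
  then show ?thesis
    by (simp add: map_concat concat_concat_map o_def case_prod_unfold mult.assoc)
qed

lemma C_set_subset_tensor_coinv: "C_set \<delta> \<tau> \<subseteq> tensor_coinv \<delta>"
proof
  fix X
  let ?galois = "\<lambda>(x, u, v). map (\<lambda>(w, k). (x, u * w, k)) (\<delta> v)"
  let ?C = "[(x, u, v * a'). (a, a') \<leftarrow> X, (x, h) \<leftarrow> \<delta> a, (u, v) \<leftarrow> \<tau> h]"
  assume "X \<in> C_set \<delta> \<tau>"
  then have "teq (relB3 B) ?C [(a, a', 1). (a, a') \<leftarrow> X]"
    by (simp add: C_set_def)
  then have "teq rel3 (concat (map ?galois ?C)) (concat (map ?galois [(a, a', 1). (a, a') \<leftarrow> X]))"
    by (rule teq_concat_map_descends[OF descends_galois_map])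
  also have "teq rel3 \<dots> (concat (map (\<lambda>(a, a'). [(a, a', 1)]) X))"
  proof -
    have "teq rel3 (concat (map (\<lambda>(w, k). [(a, a' * w, k)]) (\<delta> 1))) [(a, a', 1)]" for a a'
      using teq_concat_map_descends[OF descends_insert_mult_left[where x = a and u = a'] coaction_one] by simp
    then have "teq rel3 (concat (map (\<lambda>(a, a'). concat (map (\<lambda>(w, k). [(a, a' * w, k)]) (\<delta> 1))) X))
        (concat (map (\<lambda>(a, a'). [(a, a', 1)]) X))"
      by (intro teq_concat_map) (auto split: prod.splits)
    then show ?thesis
      by (simp add: concat_map_singleton_pair o_def case_prod_unfold)
  qed
  finally show "X \<in> tensor_coinv \<delta>"
    using galois_map_translation_expansion
    by (simp add: tensor_coinv_def concat_map_singleton_pair) (meson teq_sym teq_trans)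
qed

lemma tensor_coinv_subset_C_set: "tensor_coinv \<delta> \<subseteq> C_set \<delta> \<tau>"
proof
  fix X
  let ?galois = "\<lambda>(x, u, v). map (\<lambda>(w, k). (x, u * w, k)) (\<delta> v)"
  let ?translation = "\<lambda>(x, y, h). map (\<lambda>(u, v). (x, y * u, v)) (\<tau> h)"
  let ?C = "[(x, u, v * a'). (a, a') \<leftarrow> X, (x, h) \<leftarrow> \<delta> a, (u, v) \<leftarrow> \<tau> h]"
  let ?K = "[(x, y, h * k). (a, a') \<leftarrow> X, (x, h) \<leftarrow> \<delta> a, (y, k) \<leftarrow> \<delta> a']"
  assume "X \<in> tensor_coinv \<delta>"
  then have K: "teq rel3 ?K [(a, a', 1). (a, a') \<leftarrow> X]"
    by (simp add: tensor_coinv_def)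
  have "teq (relB3 B) ?C (concat (map ?translation (concat (map ?galois ?C))))"
    using teq_concat_map[of ?C "relB3 B" "\<lambda>p. concat (map ?translation (?galois p))" "\<lambda>p. [p]"]
      translation_galois_map_cancel
    by (simp add: concat_map_concat_map teq_sym split: prod.splits)
  also have "teq (relB3 B) \<dots> (concat (map ?translation ?K))"
    by (rule teq_concat_map_descends[OF descends_translation galois_map_translation_expansion])
  also have "teq (relB3 B) \<dots> (concat (map ?translation [(a, a', 1). (a, a') \<leftarrow> X]))"
    by (rule teq_concat_map_descends[OF descends_translation K])
  also have "teq (relB3 B) \<dots> [(a, a', 1). (a, a') \<leftarrow> X]"
  proof -
    have "teq (relB3 B) (concat (map (\<lambda>(u, v). [(a, a' * u, v)]) (\<tau> 1))) [(a, a', 1)]" for a a'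
      using teq_concat_map_descends[OF descends_insert_mult_left_balanced[where x = a and y = a']
          translation_one]
      by simp
    then have "teq (relB3 B) (concat (map (\<lambda>(a, a'). concat (map (\<lambda>(u, v). [(a, a' * u, v)]) (\<tau> 1))) X))
        (concat (map (\<lambda>(a, a'). [(a, a', 1)]) X))"
      by (intro teq_concat_map) (auto split: prod.splits)
    then show ?thesis
      by (simp add: concat_map_singleton_pair o_def case_prod_unfold)
  qed
  finally show "X \<in> C_set \<delta> \<tau>"
    by (simp add: C_set_def)
qed

lemma tensor_coinv_eq_C_set: "tensor_coinv \<delta> = C_set \<delta> \<tau>"
  using tensor_coinv_subset_C_set C_set_subset_tensor_coinv by (rule antisym)

end

theorem lemma3p3:
  fixes \<Delta> :: "'h::complex_algebra_1 \<Rightarrow> ('h \<times> 'h) list"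
    and \<epsilon> :: "'h \<Rightarrow> complex"
    and S Sinv :: "'h \<Rightarrow> 'h"
    and \<delta> :: "'a::complex_algebra_1 \<Rightarrow> ('a \<times> 'h) list"
    and \<tau> :: "'h \<Rightarrow> ('a \<times> 'a) list"
  assumes "hopf_algebra \<Delta> \<epsilon> S"
    and "\<forall>h. S (Sinv h) = h \<and> Sinv (S h) = h"
    and "comodule_algebra \<Delta> \<epsilon> \<delta>"
    and "hopf_galois \<delta>"
    and "translation_map \<delta> \<tau>"
  shows "cotensor \<delta> Sinv = tensor_coinv \<delta> \<and> tensor_coinv \<delta> = C_set \<delta> \<tau>"
proof
  interpret hopf_comodule_alg \<Delta> \<epsilon> S Sinv \<delta>
    using assms by unfold_locales
  show "cotensor \<delta> Sinv = tensor_coinv \<delta>"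
    by (rule cotensor_eq_tensor_coinv)
next
  interpret hopf_galois_ext \<Delta> \<epsilon> \<delta> \<tau>
    using assms by unfold_locales
  show "tensor_coinv \<delta> = C_set \<delta> \<tau>"
    by (rule tensor_coinv_eq_C_set)
qed

end
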